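(* Let $L=\langle S,A,\to\rangle$ be a labelled transition system. For all $x,y\in\{o,b\}$, the relation $\mathrel{\underline{\leftrightarrow}}^{ed}_{(x,y)}$ ($(x,y)$-generic bisimilarity with explicit divergence) coincides with the relation $\equiv^{ed}_{E(x,y)}$ (winning for Duplicator in the $E(x,y)$-generic bisimulation game with explicit divergence).
   Context: A labelled transition system (LTS) is $L=\langle S,A,\to\rangle$ with $S$ a set of states, $A$ a set of actions containing a special internal action $\tau$, and $\to\subseteq S\times A\times S$; write $s\xrightarrow{a}t$. Let $\twoheadrightarrow$ be the reflexive-transitive closure and $\twoheadrightarrow^+$ the transitive closure of $\xrightarrow{\tau}$. For $R\subseteq S\times S$ and $s,s',t\in S$: $s\twoheadrightarrow_{o,R,t}s'$ iff $s\twoheadrightarrow s'$; $s\twoheadrightarrow_{b,R,t}s'$ iff $s\twoheadrightarrow s'$, $t\,R\,s$ and $t\,R\,s'$. For $x,y\in\{o,b\}$, a symmetric $R\subseteq S\times S$ is an $(x,y)$-generic bisimulation if whenever $s\,R\,t$ and $s\xrightarrow{a}s'$, either $a=\tau$ and $s'\,R\,t$, or there are $t',t_1,t_2$ with $t\twoheadrightarrow_{x,R,s}t_1\xrightarrow{a}t_2\twoheadrightarrow_{y,R,s'}t'$ and $s'\,R\,t'$. A symmetric $R$ is an $(x,y)$-generic bisimulation with explicit divergence if it is an $(x,y)$-generic bisimulation and for all $s\,R\,t$, if there is an infinite sequence $s=s_0\xrightarrow{\tau}s_1\xrightarrow{\tau}s_2\cdots$, then there are a state $t'$ with $t\twoheadrightarrow^+t'$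 and some $k$ with $s_k\,R\,t'$. Write $s\mathrel{\underline{\leftrightarrow}}^{ed}_{(x,y)}t$ iff some such $R$ relates $s$ and $t$. Game with explicit divergence. Let $\frown,\smile$ be formal tags and $E\subseteq\{\frown,\smile\}$. The game is played by Spoiler and Duplicator on Spoiler-owned configurations $\langle (s,t),c,m,r\rangle_S$ and Duplicator-owned $\langle (s,t),c,m,r\rangle_D$, with $(s,t)\in S\times S$, $c\in (A\times S)\cup\{\dagger\}$, $m\in (S\times\{\frown,\smile\})\cup\{\dagger\}$, $r\in\{*,\checkmark\}$. From $\langle (s,t),c,m,r\rangle_S$ Spoiler may: (S1) move to $\langle (s,t),c,m,*\rangle_D$ if $c\neq\dagger$; (S2a) for some $s\xrightarrow{a}s'$, move to $\langle (s,t),(a,s'),(t,\frown),*\rangle_D$ if $c=\dagger$; (S2b) for some $s\xrightarrow{a}s'$, move to $\langle (s,t),(a,s'),(t,\frown),\checkmark\rangle_D$ if $c\neq (a,s')$; (S3) for some $t\xrightarrow{a}t'$, move to $\langle (t,s),(a,t'),(s,\frown),\checkmark\rangle_D$. From $\langle (u,v),(a,u'),(\bar v,f),r\rangle_D$ Duplicator may: (D1) move to $\langle (u',\bar v),\dagger,\dagger,*\rangle_S$ if $a=\tau$; (D2) if $f=\frown$ and $\bar v\xrightarrow{a}v'$: (a) move to $\langle (u',v'),(a,u'),(v',\smile),*\rangle_S$, or (b) move to $\langle (u',v'),\dagger,\dagger,\checkmark\rangle_S$, or (c) only if $\smile\in E$, move to $\langle (u,v),(a,u'),(v',\smile),*\rangle_S$;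 (D3) for some $\bar v\xrightarrow{\tau}v'$: (a) move to $\langle (u,v'),(a,u'),(v',f),*\rangle_S$, or (b) only if $f=\smile$, move to $\langle (u',v'),\dagger,\dagger,\checkmark\rangle_S$, or (c) only if $f\in E$, move to $\langle (u,v),(a,u'),(v',f),*\rangle_S$. Duplicator wins a finite play if Spoiler gets stuck, and an infinite play if it contains infinitely many $\checkmark$ rewards; all other plays are won by Spoiler. Write $s\equiv^{ed}_E t$ iff Duplicator has a strategy winning all plays from $\langle (s,t),\dagger,\dagger,*\rangle_S$. $E(x,y)$ is the smallest set with $\frown\in E(o,y)$ and $\smile\in E(x,o)$ for all $x,y\in\{o,b\}$. *)

theory Defs
  imports Main
begin

text \<open>An LTS is given by a transition predicate tr s a t over state type 's and
  action type 'a, together with the distinguished internal action tau.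
  The state set S is the whole type 's.\<close>

datatype mode = Om | Bm

definition tau_steps :: "('s \<Rightarrow> 'a \<Rightarrow> 's \<Rightarrow> bool) \<Rightarrow> 'a \<Rightarrow> 's \<Rightarrow> 's \<Rightarrow> bool" where
  "tau_steps tr tau = (\<lambda>s t. tr s tau t)\<^sup>*\<^sup>*"

definition tau_steps_plus :: "('s \<Rightarrow> 'a \<Rightarrow> 's \<Rightarrow> bool) \<Rightarrow> 'a \<Rightarrow> 's \<Rightarrow> 's \<Rightarrow> bool" where
  "tau_steps_plus tr tau = (\<lambda>s t. tr s tau t)\<^sup>+\<^sup>+"

definition gsteps :: "('s \<Rightarrow> 'a \<Rightarrow> 's \<Rightarrow> bool) \<Rightarrow> 'a \<Rightarrow> mode \<Rightarrow> ('s \<Rightarrow> 's \<Rightarrow> bool)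
    \<Rightarrow> 's \<Rightarrow> 's \<Rightarrow> 's \<Rightarrow> bool" where
  "gsteps tr tau x R t s s' \<longleftrightarrow>
     (case x of
        Om \<Rightarrow> tau_steps tr tau s s'
      | Bm \<Rightarrow> tau_steps tr tau s s' \<and> R t s \<and> R t s')"

definition generic_bisim :: "('s \<Rightarrow> 'a \<Rightarrow> 's \<Rightarrow> bool) \<Rightarrow> 'a \<Rightarrow> mode \<Rightarrow> mode
    \<Rightarrow> ('s \<Rightarrow> 's \<Rightarrow> bool) \<Rightarrow> bool" where
  "generic_bisim tr tau x y R \<longleftrightarrow>
     symp R \<and>
     (\<forall>s t a s'. R s t \<and> tr s a s' \<longrightarrow>
        (a = tau \<and> R s' t) \<or>
        (\<exists>t' t1 t2. gsteps tr tau x R s t t1 \<and> tr t1 a t2 \<and>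
                     gsteps tr tau y R s' t2 t' \<and> R s' t'))"

definition generic_bisim_ed :: "('s \<Rightarrow> 'a \<Rightarrow> 's \<Rightarrow> bool) \<Rightarrow> 'a \<Rightarrow> mode \<Rightarrow> mode
    \<Rightarrow> ('s \<Rightarrow> 's \<Rightarrow> bool) \<Rightarrow> bool" where
  "generic_bisim_ed tr tau x y R \<longleftrightarrow>
     generic_bisim tr tau x y R \<and>
     (\<forall>s t. R s t \<longrightarrow>
        (\<forall>f. f 0 = s \<and> (\<forall>i. tr (f i) tau (f (Suc i))) \<longrightarrow>
           (\<exists>t' k. tau_steps_plus tr tau t t' \<and> R (f k) t')))"

definition bisimilar_ed :: "('s \<Rightarrow> 'a \<Rightarrow> 's \<Rightarrow> bool) \<Rightarrow> 'a \<Rightarrow> mode \<Rightarrow> mode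
    \<Rightarrow> 's \<Rightarrow> 's \<Rightarrow> bool" where
  "bisimilar_ed tr tau x y s t \<longleftrightarrow> (\<exists>R. generic_bisim_ed tr tau x y R \<and> R s t)"

datatype tag = Frown | Smile
datatype owner = Spoiler | Duplicator
datatype reward = Star | Check

text \<open>Configuration <(s,t), c, m, r>_owner; the dagger is represented by None.\<close>
datatype ('s, 'a) conf =
  Conf owner "'s \<times> 's" "('a \<times> 's) option" "('s \<times> tag) option" reward

fun conf_owner :: "('s, 'a) conf \<Rightarrow> owner" where
  "conf_owner (Conf p _ _ _ _) = p"

fun conf_reward :: "('s, 'a) conf \<Rightarrow> reward" where
  "conf_reward (Conf _ _ _ _ r) = r"

inductive game_move :: "('s \<Rightarrow> 'a \<Rightarrow> 's \<Rightarrow> bool) \<Rightarrow> 'a \<Rightarrow> tag set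
    \<Rightarrow> ('s, 'a) conf \<Rightarrow> ('s, 'a) conf \<Rightarrow> bool"
  for tr :: "'s \<Rightarrow> 'a \<Rightarrow> 's \<Rightarrow> bool" and tau :: 'a and E :: "tag set" where
  S1: "c \<noteq> None \<Longrightarrow>
     game_move tr tau E (Conf Spoiler (s, t) c m r) (Conf Duplicator (s, t) c m Star)"
| S2a: "c = None \<Longrightarrow> tr s a s' \<Longrightarrow>
     game_move tr tau E (Conf Spoiler (s, t) c m r)
       (Conf Duplicator (s, t) (Some (a, s')) (Some (t, Frown)) Star)"
| S2b: "c \<noteq> Some (a, s') \<Longrightarrow> tr s a s' \<Longrightarrow>
     game_move tr tau E (Conf Spoiler (s, t) c m r)
       (Conf Duplicator (s, t) (Some (a, s')) (Some (t, Frown)) Check)"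
| S3: "tr t a t' \<Longrightarrow>
     game_move tr tau E (Conf Spoiler (s, t) c m r)
       (Conf Duplicator (t, s) (Some (a, t')) (Some (s, Frown)) Check)"
| D1: "a = tau \<Longrightarrow>
     game_move tr tau E (Conf Duplicator (u, v) (Some (a, u')) (Some (vb, f)) r)
       (Conf Spoiler (u', vb) None None Star)"
| D2a: "f = Frown \<Longrightarrow> tr vb a v' \<Longrightarrow>
     game_move tr tau E (Conf Duplicator (u, v) (Some (a, u')) (Some (vb, f)) r)
       (Conf Spoiler (u', v') (Some (a, u')) (Some (v', Smile)) Star)"
| D2b: "f = Frown \<Longrightarrow> tr vb a v' \<Longrightarrow>
     game_move tr tau E (Conf Duplicator (u, v) (Some (a, u')) (Some (vb, f)) r)
       (Conf Spoiler (u', v') None None Check)"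
| D2c: "f = Frown \<Longrightarrow> tr vb a v' \<Longrightarrow> Smile \<in> E \<Longrightarrow>
     game_move tr tau E (Conf Duplicator (u, v) (Some (a, u')) (Some (vb, f)) r)
       (Conf Spoiler (u, v) (Some (a, u')) (Some (v', Smile)) Star)"
| D3a: "tr vb tau v' \<Longrightarrow>
     game_move tr tau E (Conf Duplicator (u, v) (Some (a, u')) (Some (vb, f)) r)
       (Conf Spoiler (u, v') (Some (a, u')) (Some (v', f)) Star)"
| D3b: "tr vb tau v' \<Longrightarrow> f = Smile \<Longrightarrow>
     game_move tr tau E (Conf Duplicator (u, v) (Some (a, u')) (Some (vb, f)) r)
       (Conf Spoiler (u', v') None None Check)"
| D3c: "tr vb tau v' \<Longrightarrow> f \<in> E \<Longrightarrow>
     game_move tr tau E (Conf Duplicator (u, v) (Some (a, u')) (Some (vb, f)) r)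
       (Conf Spoiler (u, v) (Some (a, u')) (Some (v', f)) Star)"

definition dup_strategy :: "('s \<Rightarrow> 'a \<Rightarrow> 's \<Rightarrow> bool) \<Rightarrow> 'a \<Rightarrow> tag set
    \<Rightarrow> (('s, 'a) conf list \<Rightarrow> ('s, 'a) conf) \<Rightarrow> bool" where
  "dup_strategy tr tau E \<sigma> \<longleftrightarrow>
     (\<forall>h. h \<noteq> [] \<and> conf_owner (last h) = Duplicator \<and>
          (\<exists>c'. game_move tr tau E (last h) c') \<longrightarrow>
          game_move tr tau E (last h) (\<sigma> h))"

definition finite_play :: "('s \<Rightarrow> 'a \<Rightarrow> 's \<Rightarrow> bool) \<Rightarrow> 'a \<Rightarrow> tag set
    \<Rightarrow> (('s, 'a) conf list \<Rightarrow> ('s, 'a) conf) \<Rightarrow> ('s, 'a) conf \<Rightarrow> ('s, 'a) conf list \<Rightarrow> bool" where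
  "finite_play tr tau E \<sigma> c0 ps \<longleftrightarrow>
     ps \<noteq> [] \<and> ps ! 0 = c0 \<and>
     (\<forall>i. Suc i < length ps \<longrightarrow>
        game_move tr tau E (ps ! i) (ps ! Suc i) \<and>
        (conf_owner (ps ! i) = Duplicator \<longrightarrow> ps ! Suc i = \<sigma> (take (Suc i) ps)))"

definition infinite_play :: "('s \<Rightarrow> 'a \<Rightarrow> 's \<Rightarrow> bool) \<Rightarrow> 'a \<Rightarrow> tag set
    \<Rightarrow> (('s, 'a) conf list \<Rightarrow> ('s, 'a) conf) \<Rightarrow> ('s, 'a) conf \<Rightarrow> (nat \<Rightarrow> ('s, 'a) conf) \<Rightarrow> bool" where
  "infinite_play tr tau E \<sigma> c0 p \<longleftrightarrow>
     p 0 = c0 \<and>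
     (\<forall>i. game_move tr tau E (p i) (p (Suc i)) \<and>
        (conf_owner (p i) = Duplicator \<longrightarrow> p (Suc i) = \<sigma> (map p [0..<Suc i])))"

definition dup_wins :: "('s \<Rightarrow> 'a \<Rightarrow> 's \<Rightarrow> bool) \<Rightarrow> 'a \<Rightarrow> tag set
    \<Rightarrow> (('s, 'a) conf list \<Rightarrow> ('s, 'a) conf) \<Rightarrow> ('s, 'a) conf \<Rightarrow> bool" where
  "dup_wins tr tau E \<sigma> c0 \<longleftrightarrow>
     dup_strategy tr tau E \<sigma> \<and>
     (\<forall>ps. finite_play tr tau E \<sigma> c0 ps \<and>
           \<not> (\<exists>c'. game_move tr tau E (last ps) c') \<longrightarrow>
           conf_owner (last ps) = Spoiler) \<and>
     (\<forall>p. infinite_play tr tau E \<sigma> c0 p \<longrightarrow>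
           (\<exists>\<^sub>\<infinity>i. conf_reward (p i) = Check))"

definition game_equiv :: "('s \<Rightarrow> 'a \<Rightarrow> 's \<Rightarrow> bool) \<Rightarrow> 'a \<Rightarrow> tag set \<Rightarrow> 's \<Rightarrow> 's \<Rightarrow> bool" where
  "game_equiv tr tau E s t \<longleftrightarrow>
     (\<exists>\<sigma>. dup_wins tr tau E \<sigma> (Conf Spoiler (s, t) None None Star))"

definition Eset :: "mode \<Rightarrow> mode \<Rightarrow> tag set" where
  "Eset x y = (if x = Om then {Frown} else {}) \<union> (if y = Om then {Smile} else {})"

end

theory Submission
  imports Defs
begin

text \<open>
  From a game to a bisimulation: the pairs occurring at Spoiler positions of plays that follow
  some winning Duplicator strategy form an (x,y)-bisimulation with explicit divergence. Every
  Duplicator phase of such a play must eventually complete the required matching transition,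
  since otherwise Spoiler could keep the play forever in that phase, where no rewards are given.

  From a bisimulation to a game: Duplicator plays along the largest lax bisimulation, which
  contains every generic bisimulation with explicit divergence and is closed under stuttering.
  She always follows a matching path of minimal length, so every Duplicator phase ends. A play
  with finitely many rewards would then force Spoiler into an infinite silent run against a fixed
  state that has no silent step to a related state, contradicting explicit divergence.
\<close>

lemma Eset_Frown_iff [simp]: "Frown \<in> Eset x y \<longleftrightarrow> x = Om"
  by (simp add: Eset_def)

lemma Eset_Smile_iff [simp]: "Smile \<in> Eset x y \<longleftrightarrow> y = Om"
  by (simp add: Eset_def)

lemma tau_steps_refl [simp]: "tau_steps tr tau s s"
  by (simp add: tau_steps_def)

lemma tau_steps_step: "tr s tau s' \<Longrightarrow> tau_steps tr tau s' t \<Longrightarrow> tau_steps tr tau s t"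
  unfolding tau_steps_def by (rule converse_rtranclp_into_rtranclp)

lemma tau_step_imp_tau_steps: "tr s tau s' \<Longrightarrow> tau_steps tr tau s s'"
  unfolding tau_steps_def by auto

lemma tau_steps_trans: "tau_steps tr tau s s' \<Longrightarrow> tau_steps tr tau s' t \<Longrightarrow> tau_steps tr tau s t"
  unfolding tau_steps_def by (rule rtranclp_trans)

lemma tau_steps_induct [consumes 1, case_names refl step]:
  assumes "tau_steps tr tau s t" and "P s"
    and "\<And>u v. tau_steps tr tau s u \<Longrightarrow> tr u tau v \<Longrightarrow> P u \<Longrightarrow> P v"
  shows "P t"
  using assms unfolding tau_steps_def by (induction rule: rtranclp_induct) auto

lemma tau_steps_plus_step: "tr s tau s' \<Longrightarrow> tau_steps tr tau s' t \<Longrightarrow> tau_steps_plus tr tau s t"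
  unfolding tau_steps_def tau_steps_plus_def by (rule rtranclp_into_tranclp2)

lemma tau_steps_plus_trans:
  "tau_steps tr tau s s' \<Longrightarrow> tau_steps_plus tr tau s' t \<Longrightarrow> tau_steps_plus tr tau s t"
  unfolding tau_steps_def tau_steps_plus_def by (rule rtranclp_tranclp_tranclp)

lemma tau_steps_neq_imp_plus: "tau_steps tr tau s t \<Longrightarrow> s \<noteq> t \<Longrightarrow> tau_steps_plus tr tau s t"
  unfolding tau_steps_def tau_steps_plus_def by (metis rtranclpD)

lemma tau_steps_plusE:
  assumes "tau_steps_plus tr tau s t"
  obtains s' where "tr s tau s'" "tau_steps tr tau s' t"
  using assms unfolding tau_steps_plus_def tau_steps_def by (blast dest: tranclpD)

lemma tau_steps_plus_last_step:
  assumes "tau_steps_plus tr tau s t"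
  obtains s' where "tau_steps tr tau s s'" "tr s' tau t"
  using assms unfolding tau_steps_plus_def tau_steps_def
  by (induction rule: tranclp_induct) (auto intro: tranclp_into_rtranclp)

lemma gsteps_refl: "(m = Bm \<Longrightarrow> R s t) \<Longrightarrow> gsteps tr tau m R s t t"
  by (cases m) (auto simp: gsteps_def)

lemma gsteps_imp_tau_steps: "gsteps tr tau m R s t t' \<Longrightarrow> tau_steps tr tau t t'"
  by (cases m) (auto simp: gsteps_def)

lemma gsteps_BmD: "gsteps tr tau m R s t t' \<Longrightarrow> m = Bm \<Longrightarrow> R s t \<and> R s t'"
  by (auto simp: gsteps_def)

lemma gsteps_tau_steps_pre:
  "tau_steps tr tau t0 t \<Longrightarrow> (m = Bm \<Longrightarrow> R s t0) \<Longrightarrow> gsteps tr tau m R s t t'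
    \<Longrightarrow> gsteps tr tau m R s t0 t'"
  by (cases m) (auto simp: gsteps_def intro: tau_steps_trans)

lemma gsteps_mono: "gsteps tr tau m R s t t' \<Longrightarrow> R \<le> R' \<Longrightarrow> gsteps tr tau m R' s t t'"
  by (cases m) (auto simp: gsteps_def)

abbreviation init_conf :: "'s \<Rightarrow> 's \<Rightarrow> ('s, 'a) conf" where
  "init_conf s t \<equiv> Conf Spoiler (s, t) None None Star"

lemma game_move_SpoilerE:
  assumes "game_move tr tau E (Conf Spoiler (s, t) c m r) c'"
  obtains (S1) "c \<noteq> None" "c' = Conf Duplicator (s, t) c m Star"
  | (S2a) a s' where "c = None" "tr s a s'"
      "c' = Conf Duplicator (s, t) (Some (a, s')) (Some (t, Frown)) Star"
  | (S2b) a s' where "c \<noteq> Some (a, s')" "tr s a s'"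
      "c' = Conf Duplicator (s, t) (Some (a, s')) (Some (t, Frown)) Check"
  | (S3) a t' where "tr t a t'" "c' = Conf Duplicator (t, s) (Some (a, t')) (Some (s, Frown)) Check"
  using assms by (cases rule: game_move.cases) (simp_all; metis that)

lemma game_move_DuplicatorE:
  assumes "game_move tr tau E (Conf Duplicator (u, w) (Some (a, u')) (Some (v, f)) r) c'"
  obtains (D1) "a = tau" "c' = Conf Spoiler (u', v) None None Star"
  | (D2a) v' where "f = Frown" "tr v a v'"
      "c' = Conf Spoiler (u', v') (Some (a, u')) (Some (v', Smile)) Star"
  | (D2b) v' where "f = Frown" "tr v a v'" "c' = Conf Spoiler (u', v') None None Check"
  | (D2c) v' where "f = Frown" "tr v a v'" "Smile \<in> E"
      "c' = Conf Spoiler (u, w) (Some (a, u')) (Some (v', Smile)) Star"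
  | (D3a) v' where "tr v tau v'" "c' = Conf Spoiler (u, v') (Some (a, u')) (Some (v', f)) Star"
  | (D3b) v' where "tr v tau v'" "f = Smile" "c' = Conf Spoiler (u', v') None None Check"
  | (D3c) v' where "tr v tau v'" "f \<in> E"
      "c' = Conf Spoiler (u, w) (Some (a, u')) (Some (v', f)) Star"
  using assms by (cases rule: game_move.cases) (simp_all; metis that)

lemma game_move_Duplicator_owner:
  "game_move tr tau E c c' \<Longrightarrow> conf_owner c = Duplicator \<Longrightarrow> conf_owner c' = Spoiler"
  by (induction rule: game_move.induct) auto

lemma game_move_repeat:
  "game_move tr tau E (Conf Spoiler pq (Some ca) m r) (Conf Duplicator pq (Some ca) m Star)"
  by (cases pq) (auto intro: game_move.S1)

lemma Star_repeat_move:
  "c = Conf Spoiler pq (Some ca) m Star \<Longrightarrow> Q (Conf Duplicator pq (Some ca) m Star) \<Longrightarrow>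
    \<exists>c'. game_move tr tau E c c' \<and> conf_reward c = Star \<and> conf_reward c' = Star \<and> Q c'"
  by (intro exI[of _ "Conf Duplicator pq (Some ca) m Star"]) (simp add: game_move_repeat)

lemma game_move_challenge:
  "tr p a p' \<Longrightarrow> (c = Some (a, p') \<Longrightarrow> m = Some (q, Frown)) \<Longrightarrow>
    \<exists>r'. game_move tr tau E (Conf Spoiler (p, q) c m r)
      (Conf Duplicator (p, q) (Some (a, p')) (Some (q, Frown)) r')"
  by (cases "c = Some (a, p')") (auto intro: game_move.S1 game_move.S2b)

lemma finite_play_init: "finite_play tr tau E \<sigma> c0 [c0]"
  by (simp add: finite_play_def)

lemma finite_play_snoc:
  assumes fp: "finite_play tr tau E \<sigma> c0 h" and mv: "game_move tr tau E (last h) c"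
    and \<sigma>: "conf_owner (last h) = Duplicator \<Longrightarrow> c = \<sigma> h"
  shows "finite_play tr tau E \<sigma> c0 (h @ [c])"
proof -
  have h: "h \<noteq> []" "h ! 0 = c0" and steps: "\<And>i. Suc i < length h \<Longrightarrow>
        game_move tr tau E (h ! i) (h ! Suc i) \<and>
        (conf_owner (h ! i) = Duplicator \<longrightarrow> h ! Suc i = \<sigma> (take (Suc i) h))"
    using fp unfolding finite_play_def by auto
  have "game_move tr tau E ((h @ [c]) ! i) ((h @ [c]) ! Suc i) \<and>
        (conf_owner ((h @ [c]) ! i) = Duplicator \<longrightarrow> (h @ [c]) ! Suc i = \<sigma> (take (Suc i) (h @ [c])))"
    if i: "Suc i < length (h @ [c])" for i
  proof (cases "Suc i < length h")
    case True
    then show ?thesis using steps[OF True] by (simp add: nth_append)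
  next
    case False
    then have "Suc i = length h" using i by simp
    then have e: "(h @ [c]) ! i = last h" "(h @ [c]) ! Suc i = c" "take (Suc i) (h @ [c]) = h"
      using h(1) by (auto simp: nth_append last_conv_nth dest: sym)
    show ?thesis unfolding e using mv \<sigma> by simp
  qed
  with h show ?thesis unfolding finite_play_def by (simp add: nth_append)
qed

lemma finite_play_Spoiler_snoc:
  "finite_play tr tau E \<sigma> c0 h \<Longrightarrow> conf_owner (last h) = Spoiler \<Longrightarrow> game_move tr tau E (last h) c
    \<Longrightarrow> finite_play tr tau E \<sigma> c0 (h @ [c])"
  using finite_play_snoc by fastforce

lemma dup_wins_move:
  assumes W: "dup_wins tr tau E \<sigma> c0" and fp: "finite_play tr tau E \<sigma> c0 h"
    and D: "conf_owner (last h) = Duplicator"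
  shows "game_move tr tau E (last h) (\<sigma> h)"
proof (cases "\<exists>c'. game_move tr tau E (last h) c'")
  case True
  moreover have "h \<noteq> []" using fp by (simp add: finite_play_def)
  ultimately show ?thesis using W D unfolding dup_wins_def dup_strategy_def by blast
next
  case False
  with W fp D show ?thesis unfolding dup_wins_def by auto
qed

lemma dup_wins_finite_play_snoc:
  "dup_wins tr tau E \<sigma> c0 \<Longrightarrow> finite_play tr tau E \<sigma> c0 h \<Longrightarrow> conf_owner (last h) = Duplicator
    \<Longrightarrow> finite_play tr tau E \<sigma> c0 (h @ [\<sigma> h])"
  using finite_play_snoc dup_wins_move by metis

lemma strictly_growing_length:
  assumes "H 0 \<noteq> []" and grow: "\<And>n. \<exists>ys. ys \<noteq> [] \<and> H (Suc n) = H n @ ys"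
  shows "n < length (H n)"
proof (induction n)
  case 0
  then show ?case using assms(1) by simp
next
  case (Suc n)
  obtain ys where "ys \<noteq> []" "H (Suc n) = H n @ ys" using grow by blast
  with Suc show ?case by (cases ys) auto
qed

lemma infinite_play_of_chain:
  assumes fp: "\<And>n. finite_play tr tau E \<sigma> c0 (H n)"
    and grow: "\<And>n. \<exists>ys. ys \<noteq> [] \<and> H (Suc n) = H n @ ys"
  shows "infinite_play tr tau E \<sigma> c0 (\<lambda>i. H i ! i)"
proof -
  have len: "n < length (H n)" for n
    using strictly_growing_length[of H, OF _ grow] fp[of 0] by (simp add: finite_play_def)
  have prefix: "\<exists>ys. H m = H n @ ys" if "n \<le> m" for n m
    using that
  proof (induction m rule: dec_induct)
    case (step m)
    then show ?case using grow[of m] by fastforce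
  qed simp
  have nth_H: "H m ! i = H i ! i" if "i \<le> m" for i m
    using prefix[OF that] len[of i] by (auto simp: nth_append)
  have take_H: "take (Suc i) (H (Suc i)) = map (\<lambda>i. H i ! i) [0..<Suc i]" for i
  proof (rule nth_equalityI)
    show "length (take (Suc i) (H (Suc i))) = length (map (\<lambda>i. H i ! i) [0..<Suc i])"
      using len[of "Suc i"] by simp
  next
    fix k assume "k < length (take (Suc i) (H (Suc i)))"
    then show "take (Suc i) (H (Suc i)) ! k = map (\<lambda>i. H i ! i) [0..<Suc i] ! k"
      using nth_H[of k "Suc i"] by (simp del: upt_Suc)
  qed
  have "game_move tr tau E (H i ! i) (H (Suc i) ! Suc i) \<and>
      (conf_owner (H i ! i) = Duplicator \<longrightarrow> H (Suc i) ! Suc i = \<sigma> (map (\<lambda>i. H i ! i) [0..<Suc i]))"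
    for i
  proof -
    have "game_move tr tau E (H (Suc i) ! i) (H (Suc i) ! Suc i) \<and>
        (conf_owner (H (Suc i) ! i) = Duplicator \<longrightarrow> H (Suc i) ! Suc i = \<sigma> (take (Suc i) (H (Suc i))))"
      using fp[of "Suc i"] len[of "Suc i"] unfolding finite_play_def by blast
    then show ?thesis unfolding take_H using nth_H[of i "Suc i"] by simp
  qed
  moreover have "H 0 ! 0 = c0" using fp[of 0] by (simp add: finite_play_def)
  ultimately show ?thesis unfolding infinite_play_def by blast
qed

lemma dup_wins_no_Star_chain:
  assumes W: "dup_wins tr tau E \<sigma> c0" and fp: "\<And>n. finite_play tr tau E \<sigma> c0 (H n)"
    and grow: "\<And>n. \<exists>ys. ys \<noteq> [] \<and> (\<forall>c\<in>set ys. conf_reward c = Star) \<and> H (Suc n) = H n @ ys"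
  shows False
proof -
  have grow': "\<exists>ys. ys \<noteq> [] \<and> H (Suc n) = H n @ ys" for n using grow by blast
  have Star: "conf_reward (H n ! j) = Star" if "length (H 0) \<le> j" "j < length (H n)" for n j
    using that
  proof (induction n)
    case (Suc n)
    obtain ys where ys: "\<forall>c\<in>set ys. conf_reward c = Star" "H (Suc n) = H n @ ys" using grow by blast
    show ?case
    proof (cases "j < length (H n)")
      case True
      then show ?thesis using Suc ys(2) by (simp add: nth_append)
    next
      case False
      then show ?thesis using Suc.prems ys by (simp add: nth_append)
    qed
  qed simp
  have "infinite_play tr tau E \<sigma> c0 (\<lambda>i. H i ! i)"
    by (rule infinite_play_of_chain[of _ _ _ _ _ H, OF fp grow'])
  then have "\<exists>\<^sub>\<infinity>i. conf_reward (H i ! i) = Check"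
    using W unfolding dup_wins_def by blast
  then obtain i where i: "length (H 0) \<le> i" "conf_reward (H i ! i) = Check"
    unfolding cofinite_eq_sequentially frequently_sequentially by blast
  have "i < length (H i)"
    using strictly_growing_length[of H, OF _ grow'] fp[of 0] by (simp add: finite_play_def)
  with i show False using Star by fastforce
qed

text \<open>A winning strategy cannot let Spoiler stay forever, without rewards, inside a set Q of
  Duplicator positions.\<close>

lemma dup_wins_no_Star_trap:
  assumes W: "dup_wins tr tau E \<sigma> c0"
    and Q_Duplicator: "\<And>c. Q c \<Longrightarrow> conf_owner c = Duplicator"
    and stay: "\<And>h. finite_play tr tau E \<sigma> c0 h \<Longrightarrow> Q (last h) \<Longrightarrow>
       finite_play tr tau E \<sigma> c0 (h @ [\<sigma> h]) \<Longrightarrow> game_move tr tau E (last h) (\<sigma> h) \<Longrightarrow>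
       \<exists>c'. game_move tr tau E (\<sigma> h) c' \<and> conf_reward (\<sigma> h) = Star \<and> conf_reward c' = Star \<and> Q c'"
    and fp0: "finite_play tr tau E \<sigma> c0 h0" and Q0: "Q (last h0)"
  shows False
proof -
  let ?P = "\<lambda>h. finite_play tr tau E \<sigma> c0 h \<and> Q (last h)"
  define next_conf where "next_conf h =
    (SOME c'. game_move tr tau E (\<sigma> h) c' \<and> conf_reward (\<sigma> h) = Star \<and> conf_reward c' = Star \<and> Q c')"
    for h
  have step: "?P (h @ [\<sigma> h, next_conf h]) \<and> conf_reward (\<sigma> h) = Star \<and> conf_reward (next_conf h) = Star"
    if P: "?P h" for h
  proof -
    have D: "conf_owner (last h) = Duplicator" using P Q_Duplicator by blast
    have fp: "finite_play tr tau E \<sigma> c0 (h @ [\<sigma> h])"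
      using dup_wins_finite_play_snoc[OF W _ D] P by blast
    have mv: "game_move tr tau E (last h) (\<sigma> h)" using dup_wins_move[OF W _ D] P by blast
    have "\<exists>c'. game_move tr tau E (\<sigma> h) c' \<and> conf_reward (\<sigma> h) = Star \<and> conf_reward c' = Star \<and> Q c'"
      using stay[OF conjunct1[OF P] conjunct2[OF P] fp mv] .
    then have nxt: "game_move tr tau E (\<sigma> h) (next_conf h) \<and> conf_reward (\<sigma> h) = Star
        \<and> conf_reward (next_conf h) = Star \<and> Q (next_conf h)"
      unfolding next_conf_def by (rule someI_ex)
    have "conf_owner (\<sigma> h) = Spoiler" using game_move_Duplicator_owner[OF mv D] .
    then have "finite_play tr tau E \<sigma> c0 ((h @ [\<sigma> h]) @ [next_conf h])"
      using finite_play_Spoiler_snoc[OF fp] nxt by simp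
    with nxt show ?thesis by simp
  qed
  define H where "H n = ((\<lambda>h. h @ [\<sigma> h, next_conf h]) ^^ n) h0" for n
  have H_Suc: "H (Suc n) = H n @ [\<sigma> (H n), next_conf (H n)]" for n
    by (simp add: H_def)
  have P_H: "?P (H n)" for n
  proof (induction n)
    case (Suc n)
    then show ?case using step[OF Suc] by (simp only: H_Suc)
  qed (use fp0 Q0 in \<open>simp add: H_def\<close>)
  show False
  proof (rule dup_wins_no_Star_chain[OF W])
    show "finite_play tr tau E \<sigma> c0 (H n)" for n using P_H by blast
    show "\<exists>ys. ys \<noteq> [] \<and> (\<forall>c\<in>set ys. conf_reward c = Star) \<and> H (Suc n) = H n @ ys" for n
      using step[OF P_H[of n]] H_Suc by auto
  qed
qed

context
  fixes tr :: "'s \<Rightarrow> 'a \<Rightarrow> 's \<Rightarrow> bool" and tau :: 'a and x y :: mode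
begin

definition settles :: "('s \<Rightarrow> 's \<Rightarrow> bool) \<Rightarrow> 's \<Rightarrow> 's \<Rightarrow> bool" where
  "settles R s' t \<longleftrightarrow> (\<exists>t'. gsteps tr tau y R s' t t' \<and> R s' t')"

definition transfer :: "('s \<Rightarrow> 's \<Rightarrow> bool) \<Rightarrow> 's \<Rightarrow> 's \<Rightarrow> 'a \<Rightarrow> 's \<Rightarrow> bool" where
  "transfer R s t a s' \<longleftrightarrow>
     (a = tau \<and> R s' t) \<or> (\<exists>t1 t2. gsteps tr tau x R s t t1 \<and> tr t1 a t2 \<and> settles R s' t2)"

definition explicit_divergence :: "('s \<Rightarrow> 's \<Rightarrow> bool) \<Rightarrow> bool" where
  "explicit_divergence R \<longleftrightarrow>
     (\<forall>s t f. R s t \<and> f 0 = s \<and> (\<forall>i. tr (f i) tau (f (Suc i))) \<longrightarrow>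
        (\<exists>t' k. tau_steps_plus tr tau t t' \<and> R (f k) t'))"

lemma generic_bisim_ed_iff:
  "generic_bisim_ed tr tau x y R \<longleftrightarrow>
     symp R \<and> (\<forall>s t a s'. R s t \<and> tr s a s' \<longrightarrow> transfer R s t a s') \<and> explicit_divergence R"
proof -
  have "transfer R s t a s' \<longleftrightarrow> (a = tau \<and> R s' t) \<or>
      (\<exists>t' t1 t2. gsteps tr tau x R s t t1 \<and> tr t1 a t2 \<and> gsteps tr tau y R s' t2 t' \<and> R s' t')"
    for s t a s'
    unfolding transfer_def settles_def by blast
  then show ?thesis
    unfolding generic_bisim_ed_def generic_bisim_def explicit_divergence_def by auto
qed

lemma settles_refl: "R s' t \<Longrightarrow> settles R s' t"
  unfolding settles_def by (blast intro: gsteps_refl)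

lemma settles_tau_pre:
  assumes "tr t tau t0" "y = Bm \<Longrightarrow> R s' t" "settles R s' t0"
  shows "settles R s' t"
proof -
  obtain t' where "gsteps tr tau y R s' t0 t'" "R s' t'" using assms(3) unfolding settles_def by blast
  with assms(1,2) show ?thesis
    unfolding settles_def by (metis gsteps_tau_steps_pre tau_step_imp_tau_steps)
qed

lemma settles_imp_tau_steps: "settles R s' t \<Longrightarrow> \<exists>t'. tau_steps tr tau t t' \<and> R s' t'"
  unfolding settles_def by (blast dest: gsteps_imp_tau_steps)

lemma transfer_tauI: "R s' t \<Longrightarrow> transfer R s t tau s'"
  unfolding transfer_def by blast

lemma transfer_visibleI:
  "gsteps tr tau x R s t t1 \<Longrightarrow> tr t1 a t2 \<Longrightarrow> settles R s' t2 \<Longrightarrow> transfer R s t a s'"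
  unfolding transfer_def by blast

lemma transferE:
  assumes "transfer R s t a s'"
  obtains (silent) "a = tau" "R s' t"
  | (visible) t1 t2 where "gsteps tr tau x R s t t1" "tr t1 a t2" "settles R s' t2"
  using assms unfolding transfer_def by (elim disjE exE conjE) (metis that)+

lemma transfer_tau_pre:
  assumes step: "tr t tau t0" and Bm: "x = Bm \<Longrightarrow> R s t" and "transfer R s t0 a s'"
  shows "transfer R s t a s'"
  using \<open>transfer R s t0 a s'\<close>
proof (cases rule: transferE)
  case silent
  have "gsteps tr tau x R s t t" using Bm by (rule gsteps_refl)
  moreover have "settles R s' t0" using silent(2) by (rule settles_refl)
  ultimately show ?thesis using step[folded silent(1)] by (blast intro: transfer_visibleI)
next
  case (visible t1 t2)
  have "gsteps tr tau x R s t t1"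
    using gsteps_tau_steps_pre[OF tau_step_imp_tau_steps[of tr, OF step] Bm visible(1)] .
  then show ?thesis using visible(2,3) by (rule transfer_visibleI)
qed

lemma transfer_visible_tau_steps_pre:
  assumes steps: "tau_steps tr tau t t0" and Bm: "x = Bm \<Longrightarrow> R s t" and "a \<noteq> tau"
    and "transfer R s t0 a s'"
  shows "transfer R s t a s'"
  using \<open>transfer R s t0 a s'\<close>
proof (cases rule: transferE)
  case (visible t1 t2)
  have "gsteps tr tau x R s t t1" using gsteps_tau_steps_pre[OF steps Bm visible(1)] .
  then show ?thesis using visible(2,3) by (rule transfer_visibleI)
qed (use \<open>a \<noteq> tau\<close> in simp)

lemma transfer_tau_imp_tau_steps:
  assumes "transfer R s t tau s'"
  shows "\<exists>t'. tau_steps tr tau t t' \<and> R s' t'"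
  using assms
proof (cases rule: transferE)
  case (visible t1 t2)
  obtain t' where "tau_steps tr tau t2 t'" "R s' t'" using settles_imp_tau_steps[OF visible(3)] by blast
  moreover have "tau_steps tr tau t t1" using gsteps_imp_tau_steps[OF visible(1)] .
  ultimately show ?thesis using tau_steps_trans tau_steps_step visible(2) by metis
next
  case silent
  then show ?thesis by (intro exI[of _ t]) simp
qed

subsection \<open>Winning strategies yield a bisimulation\<close>

text \<open>Spoiler positions at (p,q) from which Spoiler can challenge any transition of p; the
  third kind arises in the middle of a b-mode y-phase, where (p,q) is already a genuine pair.\<close>

definition challenge_conf :: "'s \<Rightarrow> 's \<Rightarrow> ('s, 'a) conf \<Rightarrow> bool" where
  "challenge_conf p q c \<longleftrightarrow> (\<exists>r. c = Conf Spoiler (p, q) None None r) \<or>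
     (\<exists>a p' r. c = Conf Spoiler (p, q) (Some (a, p')) (Some (q, Frown)) r \<and> tr p a p') \<or>
     (y = Bm \<and> (\<exists>a r. c = Conf Spoiler (p, q) (Some (a, p)) (Some (q, Smile)) r))"

definition game_reach :: "'s \<Rightarrow> 's \<Rightarrow> bool" where
  "game_reach p q \<longleftrightarrow> (\<exists>\<sigma> s0 t0 h. dup_wins tr tau (Eset x y) \<sigma> (init_conf s0 t0) \<and>
     finite_play tr tau (Eset x y) \<sigma> (init_conf s0 t0) h \<and> challenge_conf p q (last h))"

definition game_rel :: "'s \<Rightarrow> 's \<Rightarrow> bool" where
  "game_rel p q \<longleftrightarrow> game_reach p q \<or> game_reach q p"

lemma challenge_conf_None: "challenge_conf p q (Conf Spoiler (p, q) None None r)"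
  by (simp add: challenge_conf_def)

lemma challenge_conf_Frown:
  "tr p a p' \<Longrightarrow> challenge_conf p q (Conf Spoiler (p, q) (Some (a, p')) (Some (q, Frown)) r)"
  by (simp add: challenge_conf_def)

lemma challenge_conf_Smile:
  "y = Bm \<Longrightarrow> challenge_conf p q (Conf Spoiler (p, q) (Some (a, p)) (Some (q, Smile)) r)"
  unfolding challenge_conf_def by blast

lemma game_rel_sym: "game_rel p q \<Longrightarrow> game_rel q p"
  by (auto simp: game_rel_def)

context
  fixes \<sigma> :: "('s, 'a) conf list \<Rightarrow> ('s, 'a) conf" and s0 t0 :: 's
  assumes W: "dup_wins tr tau (Eset x y) \<sigma> (init_conf s0 t0)"
begin

abbreviation play :: "('s, 'a) conf list \<Rightarrow> bool" where
  "play h \<equiv> finite_play tr tau (Eset x y) \<sigma> (init_conf s0 t0) h"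

lemma challenge_conf_game_rel: "play h \<Longrightarrow> last h = c \<Longrightarrow> challenge_conf p q c \<Longrightarrow> game_rel p q"
  unfolding game_rel_def game_reach_def
  by (intro disjI1 exI[of _ \<sigma>] exI[of _ s0] exI[of _ t0] exI[of _ h] conjI W) simp_all

lemma play_repeat:
  "play h \<Longrightarrow> last h = Conf Spoiler pq (Some ca) m r \<Longrightarrow> play (h @ [Conf Duplicator pq (Some ca) m Star])"
  by (simp add: finite_play_Spoiler_snoc game_move_repeat)

text \<open>The following four lemmas are all proved by applying dup_wins_no_Star_trap to the set of
  Duplicator positions at which the claimed property fails.\<close>

lemma smile_settles:
  assumes fp: "play h" and l: "last h = Conf Spoiler (u, w) (Some (a, u')) (Some (v, Smile)) r"
    and Bm: "y = Bm \<Longrightarrow> u = u' \<and> w = v"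
  shows "settles game_rel u' v"
proof (rule ccontr)
  assume unsettled: "\<not> settles game_rel u' v"
  define Q where "Q c \<longleftrightarrow> (\<exists>u w a u' v r. c = Conf Duplicator (u, w) (Some (a, u')) (Some (v, Smile)) r \<and>
      (y = Bm \<longrightarrow> u = u' \<and> w = v \<and> game_rel u' v) \<and> \<not> settles game_rel u' v)"
    for c :: "('s, 'a) conf"
  show False
  proof (rule dup_wins_no_Star_trap[OF W, of Q])
    show "play (h @ [Conf Duplicator (u, w) (Some (a, u')) (Some (v, Smile)) Star])"
      using play_repeat[OF fp l] .
    have "game_rel u' v" if "y = Bm"
    proof -
      have "last h = Conf Spoiler (u', v) (Some (a, u')) (Some (v, Smile)) r" using l Bm[OF that] by simp
      then show ?thesis using challenge_conf_game_rel[OF fp _ challenge_conf_Smile[OF that]] by blast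
    qed
    then show "Q (last (h @ [Conf Duplicator (u, w) (Some (a, u')) (Some (v, Smile)) Star]))"
      unfolding Q_def using Bm unsettled by auto
  next
    fix h
    assume fp': "play (h @ [\<sigma> h])" and "Q (last h)" and mv: "game_move tr tau (Eset x y) (last h) (\<sigma> h)"
    then obtain u w a u' v r where l: "last h = Conf Duplicator (u, w) (Some (a, u')) (Some (v, Smile)) r"
      and Bm: "y = Bm \<longrightarrow> u = u' \<and> w = v \<and> game_rel u' v" and unsettled: "\<not> settles game_rel u' v"
      unfolding Q_def by blast
    from mv[unfolded l] show "\<exists>c'. game_move tr tau (Eset x y) (\<sigma> h) c' \<and> conf_reward (\<sigma> h) = Star \<and>
        conf_reward c' = Star \<and> Q c'"
    proof (cases rule: game_move_DuplicatorE)
      case D1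
      have "game_rel u' v" by (rule challenge_conf_game_rel[OF fp' _ challenge_conf_None]) (simp add: D1)
      with unsettled show ?thesis using settles_refl[of game_rel] by blast
    next
      case (D3a v')
      have "y = Bm \<Longrightarrow> game_rel u' v'"
        using challenge_conf_game_rel[OF fp' _ challenge_conf_Smile] D3a(2) Bm by auto
      moreover have "\<not> settles game_rel u' v'"
        using settles_tau_pre[of v v' game_rel u', OF D3a(1)] Bm unsettled by blast
      ultimately have "Q (Conf Duplicator (u, v') (Some (a, u')) (Some (v', Smile)) Star)"
        unfolding Q_def using Bm by blast
      with D3a(2) show ?thesis by (rule Star_repeat_move)
    next
      case (D3b v')
      have "game_rel u' v'" by (rule challenge_conf_game_rel[OF fp' _ challenge_conf_None]) (simp add: D3b)
      then have "settles game_rel u' v"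
        using settles_tau_pre[OF D3b(1) _ settles_refl[of game_rel]] Bm by blast
      with unsettled show ?thesis ..
    next
      case (D3c v')
      then have "\<not> settles game_rel u' v'"
        using settles_tau_pre[of v v' game_rel u'] unsettled by auto
      then have "Q (Conf Duplicator (u, w) (Some (a, u')) (Some (v', Smile)) Star)"
        unfolding Q_def using D3c by auto
      with D3c(3) show ?thesis by (rule Star_repeat_move)
    qed simp_all
  qed (auto simp: Q_def)
qed

lemma frown_transfers:
  assumes fp: "play h" and l: "last h = Conf Duplicator (u, w) (Some (a, u')) (Some (v, Frown)) r"
    and step: "tr u a u'" and Bm: "x = Bm \<Longrightarrow> game_rel u v"
  shows "transfer game_rel u v a u'"
proof (rule ccontr)
  assume "\<not> transfer game_rel u v a u'"
  define Q where "Q c \<longleftrightarrow> (\<exists>u w a u' v r. c = Conf Duplicator (u, w) (Some (a, u')) (Some (v, Frown)) r \<and>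
      tr u a u' \<and> (x = Bm \<longrightarrow> game_rel u v) \<and> \<not> transfer game_rel u v a u')"
    for c :: "('s, 'a) conf"
  show False
  proof (rule dup_wins_no_Star_trap[OF W, of Q])
    show "Q (last h)" unfolding Q_def using l step Bm \<open>\<not> transfer game_rel u v a u'\<close> by blast
  next
    fix h
    assume fp': "play (h @ [\<sigma> h])" and "Q (last h)" and mv: "game_move tr tau (Eset x y) (last h) (\<sigma> h)"
    then obtain u w a u' v r where l: "last h = Conf Duplicator (u, w) (Some (a, u')) (Some (v, Frown)) r"
      and step: "tr u a u'" and Bm: "x = Bm \<longrightarrow> game_rel u v"
      and untransferred: "\<not> transfer game_rel u v a u'"
      unfolding Q_def by blast
    have gv: "gsteps tr tau x game_rel u v v" using Bm by (blast intro: gsteps_refl)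
    from mv[unfolded l] show "\<exists>c'. game_move tr tau (Eset x y) (\<sigma> h) c' \<and> conf_reward (\<sigma> h) = Star \<and>
        conf_reward c' = Star \<and> Q c'"
    proof (cases rule: game_move_DuplicatorE)
      case D1
      have "game_rel u' v" by (rule challenge_conf_game_rel[OF fp' _ challenge_conf_None]) (simp add: D1)
      then show ?thesis using untransferred transfer_tauI D1(1) by blast
    next
      case (D2a v')
      have "settles game_rel u' v'" by (rule smile_settles[OF fp']) (simp_all add: D2a)
      then show ?thesis using untransferred transfer_visibleI[OF gv D2a(2)] by blast
    next
      case (D2b v')
      have "game_rel u' v'" by (rule challenge_conf_game_rel[OF fp' _ challenge_conf_None]) (simp add: D2b)
      then show ?thesis using untransferred transfer_visibleI[OF gv D2b(2) settles_refl] by blast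
    next
      case (D2c v')
      have "last (h @ [\<sigma> h]) = Conf Spoiler (u, w) (Some (a, u')) (Some (v', Smile)) Star" using D2c by simp
      then have "settles game_rel u' v'" using smile_settles[OF fp'] D2c(3) by simp
      then show ?thesis using untransferred transfer_visibleI[OF gv D2c(2)] by blast
    next
      case (D3a v')
      have "game_rel u v'"
        by (rule challenge_conf_game_rel[OF fp' _ challenge_conf_Frown[OF step]]) (simp add: D3a)
      moreover have "\<not> transfer game_rel u v' a u'"
        using transfer_tau_pre[OF D3a(1)] Bm untransferred by blast
      ultimately have "Q (Conf Duplicator (u, v') (Some (a, u')) (Some (v', Frown)) Star)"
        unfolding Q_def using step by blast
      with D3a(2) show ?thesis by (rule Star_repeat_move)
    next
      case (D3c v')
      then have "\<not> transfer game_rel u v' a u'"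
        using transfer_tau_pre[OF D3c(1)] untransferred by auto
      then have "Q (Conf Duplicator (u, w) (Some (a, u')) (Some (v', Frown)) Star)"
        unfolding Q_def using D3c step by auto
      with D3c(3) show ?thesis by (rule Star_repeat_move)
    qed simp_all
  qed (use fp in \<open>auto simp: Q_def\<close>)
qed

lemma smile_exits:
  assumes fp: "play h" and l: "last h = Conf Spoiler (p, q) (Some (a, p)) (Some (q, Smile)) r"
    and Bm: "y = Bm"
  shows "\<exists>h' q' r'. play h' \<and> last h' = Conf Spoiler (p, q') None None r' \<and> tau_steps tr tau q q'"
proof (rule ccontr)
  assume no_exit: "\<not> ?thesis"
  define Q where "Q c \<longleftrightarrow> (\<exists>w r. c = Conf Duplicator (p, w) (Some (a, p)) (Some (w, Smile)) r \<and>
      tau_steps tr tau q w)"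
    for c :: "('s, 'a) conf"
  show False
  proof (rule dup_wins_no_Star_trap[OF W, of Q])
    show "play (h @ [Conf Duplicator (p, q) (Some (a, p)) (Some (q, Smile)) Star])"
      using play_repeat[OF fp l] .
    show "Q (last (h @ [Conf Duplicator (p, q) (Some (a, p)) (Some (q, Smile)) Star]))"
      unfolding Q_def by auto
  next
    fix h
    assume fp': "play (h @ [\<sigma> h])" and "Q (last h)" and mv: "game_move tr tau (Eset x y) (last h) (\<sigma> h)"
    then obtain w r where l: "last h = Conf Duplicator (p, w) (Some (a, p)) (Some (w, Smile)) r"
      and qw: "tau_steps tr tau q w"
      unfolding Q_def by blast
    from mv[unfolded l] show "\<exists>c'. game_move tr tau (Eset x y) (\<sigma> h) c' \<and> conf_reward (\<sigma> h) = Star \<and>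
        conf_reward c' = Star \<and> Q c'"
    proof (cases rule: game_move_DuplicatorE)
      case D1
      then show ?thesis using no_exit fp' qw by auto
    next
      case (D3a v')
      have "tau_steps tr tau q v'" using tau_steps_trans[OF qw tau_step_imp_tau_steps[of tr, OF D3a(1)]] .
      then have "Q (Conf Duplicator (p, v') (Some (a, p)) (Some (v', Smile)) Star)"
        unfolding Q_def by blast
      with D3a(2) show ?thesis by (rule Star_repeat_move)
    next
      case (D3b v')
      have "tau_steps tr tau q v'" using tau_steps_trans[OF qw tau_step_imp_tau_steps[of tr, OF D3b(1)]] .
      then show ?thesis using no_exit fp' D3b(3) by auto
    qed (simp_all add: Bm)
  qed (auto simp: Q_def)
qed

lemma tau_chase:
  assumes fp: "play h" and l: "last h = Conf Duplicator (f k, q) (Some (tau, f (Suc k))) (Some (q, Frown)) r"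
    and path: "\<And>i. tr (f i) tau (f (Suc i))"
  shows "\<exists>t' k'. tau_steps_plus tr tau q t' \<and> game_rel (f k') t'"
proof (rule ccontr)
  assume no_match: "\<not> ?thesis"
  have no_step_match: False if "tr q tau v'" "tau_steps tr tau v' t'" "game_rel (f k') t'" for v' t' k'
    using no_match tau_steps_plus_step[of tr, OF that(1,2)] that(3) by blast
  define Q where "Q c \<longleftrightarrow> (\<exists>k r. c = Conf Duplicator (f k, q) (Some (tau, f (Suc k))) (Some (q, Frown)) r)"
    for c :: "('s, 'a) conf"
  show False
  proof (rule dup_wins_no_Star_trap[OF W, of Q])
    show "Q (last h)" unfolding Q_def using l by blast
  next
    fix h
    assume fp': "play (h @ [\<sigma> h])" and "Q (last h)" and mv: "game_move tr tau (Eset x y) (last h) (\<sigma> h)"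
    then obtain k r where l: "last h = Conf Duplicator (f k, q) (Some (tau, f (Suc k))) (Some (q, Frown)) r"
      unfolding Q_def by blast
    from mv[unfolded l] show "\<exists>c'. game_move tr tau (Eset x y) (\<sigma> h) c' \<and> conf_reward (\<sigma> h) = Star \<and>
        conf_reward c' = Star \<and> Q c'"
    proof (cases rule: game_move_DuplicatorE)
      case D1
      let ?c' = "Conf Duplicator (f (Suc k), q) (Some (tau, f (Suc (Suc k)))) (Some (q, Frown)) Star"
      have "game_move tr tau (Eset x y) (\<sigma> h) ?c'" unfolding D1(2) using path by (rule game_move.S2a[OF refl])
      moreover have "Q ?c'" unfolding Q_def by blast
      ultimately show ?thesis using D1(2) by auto
    next
      case (D2a v')
      have "settles game_rel (f (Suc k)) v'" by (rule smile_settles[OF fp']) (simp_all add: D2a)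
      then show ?thesis using no_step_match[OF D2a(2)] settles_imp_tau_steps by blast
    next
      case (D2b v')
      have "game_rel (f (Suc k)) v'"
        by (rule challenge_conf_game_rel[OF fp' _ challenge_conf_None]) (simp add: D2b)
      then show ?thesis using no_step_match[OF D2b(2) tau_steps_refl] by blast
    next
      case (D2c v')
      have "last (h @ [\<sigma> h]) = Conf Spoiler (f k, q) (Some (tau, f (Suc k))) (Some (v', Smile)) Star"
        using D2c by simp
      then have "settles game_rel (f (Suc k)) v'" using smile_settles[OF fp'] D2c(3) by simp
      then show ?thesis using no_step_match[OF D2c(2)] settles_imp_tau_steps by blast
    next
      case (D3a v')
      have fp'': "play ((h @ [\<sigma> h]) @
          [Conf Duplicator (f k, v') (Some (tau, f (Suc k))) (Some (v', Frown)) Star])"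
        by (rule play_repeat[OF fp']) (simp add: D3a)
      have "game_rel (f k) v'"
        by (rule challenge_conf_game_rel[OF fp' _ challenge_conf_Frown[OF path]]) (simp add: D3a)
      then have "transfer game_rel (f k) v' tau (f (Suc k))"
        by (intro frown_transfers[OF fp'' _ path]) simp_all
      then show ?thesis using no_step_match[OF D3a(1)] transfer_tau_imp_tau_steps by blast
    next
      case (D3c v')
      have fp'': "play ((h @ [\<sigma> h]) @
          [Conf Duplicator (f k, q) (Some (tau, f (Suc k))) (Some (v', Frown)) Star])"
        by (rule play_repeat[OF fp']) (simp add: D3c)
      have "transfer game_rel (f k) v' tau (f (Suc k))"
        by (rule frown_transfers[OF fp'' _ path]) (use D3c in simp_all)
      then show ?thesis using no_step_match[OF D3c(1)] transfer_tau_imp_tau_steps by blast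
    qed simp_all
  qed (use fp in \<open>auto simp: Q_def\<close>)
qed

lemma challenge_conf_challenge:
  assumes fp: "play h" and c: "challenge_conf p q (last h)" and step: "tr p a p'"
  shows "\<exists>h' q' r. play h' \<and> last h' = Conf Duplicator (p, q') (Some (a, p')) (Some (q', Frown)) r \<and>
    tau_steps tr tau q q' \<and> game_rel p q' \<and> (q' = q \<or> p' = p)"
proof -
  obtain c m r where l: "last h = Conf Spoiler (p, q) c m r" using c unfolding challenge_conf_def by blast
  show ?thesis
  proof (cases "c = Some (a, p') \<longrightarrow> m = Some (q, Frown)")
    case True
    then obtain r' where "game_move tr tau (Eset x y) (last h)
        (Conf Duplicator (p, q) (Some (a, p')) (Some (q, Frown)) r')"
      using game_move_challenge[of tr p a p' c m q tau "Eset x y" r, OF step] l by auto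
    then have "play (h @ [Conf Duplicator (p, q) (Some (a, p')) (Some (q, Frown)) r'])"
      using finite_play_Spoiler_snoc[OF fp] l by simp
    moreover have "game_rel p q" by (rule challenge_conf_game_rel[OF fp refl c])
    ultimately show ?thesis by fastforce
  next
    case False \<comment> \<open>the pending challenge cannot be repeated by S2b; wait for the y-phase to end\<close>
    then have Bm: "y = Bm" and p': "p' = p" and "last h = Conf Spoiler (p, q) (Some (a, p)) (Some (q, Smile)) r"
      using c l unfolding challenge_conf_def by auto
    then obtain h' q' r' where fp': "play h'" and l': "last h' = Conf Spoiler (p, q') None None r'"
      and steps: "tau_steps tr tau q q'"
      using smile_exits[OF fp _ Bm] by blast
    have "game_rel p q'" by (rule challenge_conf_game_rel[OF fp' l' challenge_conf_None])
    obtain r'' where "game_move tr tau (Eset x y) (last h')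
        (Conf Duplicator (p, q') (Some (a, p')) (Some (q', Frown)) r'')"
      using game_move_challenge[of tr p a p' None None q' tau "Eset x y" r', OF step] l' by auto
    then have "play (h' @ [Conf Duplicator (p, q') (Some (a, p')) (Some (q', Frown)) r''])"
      using finite_play_Spoiler_snoc[OF fp'] l' by simp
    with steps \<open>game_rel p q'\<close> p' show ?thesis by fastforce
  qed
qed

end

lemma game_rel_challenge:
  assumes rel: "game_rel p q" and step: "tr p a p'"
  obtains \<sigma> s0 t0 h q' r where "dup_wins tr tau (Eset x y) \<sigma> (init_conf s0 t0)"
    "finite_play tr tau (Eset x y) \<sigma> (init_conf s0 t0) h"
    "last h = Conf Duplicator (p, q') (Some (a, p')) (Some (q', Frown)) r"
    "tau_steps tr tau q q'" "game_rel p q'" "q' = q \<or> p' = p"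
proof -
  note result = that
  from rel consider (forward) "game_reach p q" | (backward) "game_reach q p"
    unfolding game_rel_def by blast
  then show thesis
  proof cases
    case backward
    then obtain \<sigma> s0 t0 h where W: "dup_wins tr tau (Eset x y) \<sigma> (init_conf s0 t0)"
      and fp: "finite_play tr tau (Eset x y) \<sigma> (init_conf s0 t0) h" and c: "challenge_conf q p (last h)"
      unfolding game_reach_def by blast
    then obtain c m r where l: "last h = Conf Spoiler (q, p) c m r" unfolding challenge_conf_def by blast
    have "finite_play tr tau (Eset x y) \<sigma> (init_conf s0 t0)
        (h @ [Conf Duplicator (p, q) (Some (a, p')) (Some (q, Frown)) Check])"
      by (rule finite_play_Spoiler_snoc[OF fp]) (simp_all add: l game_move.S3 step)
    from result[OF W this _ tau_steps_refl rel] show thesis by simp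
  next
    case forward
    then obtain \<sigma> s0 t0 h where W: "dup_wins tr tau (Eset x y) \<sigma> (init_conf s0 t0)"
      and fp: "finite_play tr tau (Eset x y) \<sigma> (init_conf s0 t0) h" and c: "challenge_conf p q (last h)"
      unfolding game_reach_def by blast
    then show thesis using challenge_conf_challenge[OF W fp c step] result by blast
  qed
qed

lemma game_rel_transfer:
  assumes rel: "game_rel p q" and step: "tr p a p'"
  shows "transfer game_rel p q a p'"
proof (cases "a = tau \<and> p' = p")
  case True
  then show ?thesis using transfer_tauI[of game_rel] rel by blast
next
  case False
  obtain \<sigma> s0 t0 h q' r where W: "dup_wins tr tau (Eset x y) \<sigma> (init_conf s0 t0)"
    and fp: "finite_play tr tau (Eset x y) \<sigma> (init_conf s0 t0) h"
    and l: "last h = Conf Duplicator (p, q') (Some (a, p')) (Some (q', Frown)) r"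
    and steps: "tau_steps tr tau q q'" and rel': "game_rel p q'" and moved: "q' = q \<or> p' = p"
    by (rule game_rel_challenge[OF rel step])
  have "transfer game_rel p q' a p'" using frown_transfers[OF W fp l step] rel' by blast
  moreover have "q' \<noteq> q \<Longrightarrow> a \<noteq> tau" using moved False by blast
  ultimately show ?thesis
    using transfer_visible_tau_steps_pre[OF steps, of game_rel] rel by (cases "q' = q") auto
qed

lemma game_rel_divergence:
  assumes rel: "game_rel p q" and f0: "f 0 = p" and path: "\<And>i. tr (f i) tau (f (Suc i))"
  shows "\<exists>t' k. tau_steps_plus tr tau q t' \<and> game_rel (f k) t'"
proof -
  obtain \<sigma> s0 t0 h q' r where W: "dup_wins tr tau (Eset x y) \<sigma> (init_conf s0 t0)"
    and fp: "finite_play tr tau (Eset x y) \<sigma> (init_conf s0 t0) h"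
    and l: "last h = Conf Duplicator (p, q') (Some (tau, f (Suc 0))) (Some (q', Frown)) r"
    and steps: "tau_steps tr tau q q'" and rel': "game_rel p q'"
    using game_rel_challenge[OF rel path[of 0, unfolded f0]] by metis
  show ?thesis
  proof (cases "q' = q")
    case True
    then have "last h = Conf Duplicator (f 0, q) (Some (tau, f (Suc 0))) (Some (q, Frown)) r"
      using l f0 by simp
    from tau_chase[OF W fp this path] show ?thesis .
  next
    case False
    then have "tau_steps_plus tr tau q q'" using tau_steps_neq_imp_plus[OF steps] by blast
    then show ?thesis using rel' f0 by blast
  qed
qed

lemma game_rel_generic_bisim_ed: "generic_bisim_ed tr tau x y game_rel"
  unfolding generic_bisim_ed_iff explicit_divergence_def
  using game_rel_sym game_rel_transfer game_rel_divergence by (auto intro: sympI)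

lemma game_equiv_imp_bisimilar_ed:
  assumes "game_equiv tr tau (Eset x y) s t"
  shows "bisimilar_ed tr tau x y s t"
proof -
  obtain \<sigma> where W: "dup_wins tr tau (Eset x y) \<sigma> (init_conf s t)"
    using assms unfolding game_equiv_def by blast
  have "game_rel s t" by (rule challenge_conf_game_rel[OF W finite_play_init _ challenge_conf_None]) simp
  then show ?thesis unfolding bisimilar_ed_def using game_rel_generic_bisim_ed by blast
qed

subsection \<open>A bisimulation yields a winning strategy\<close>

text \<open>Answering a silent step by internal steps of t (rather than by t itself) makes the largest
  such relation closed under stuttering, see lax_bisimilar_stutter.\<close>

definition lax_transfer :: "('s \<Rightarrow> 's \<Rightarrow> bool) \<Rightarrow> 's \<Rightarrow> 's \<Rightarrow> 'a \<Rightarrow> 's \<Rightarrow> bool" where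
  "lax_transfer R s t a s' \<longleftrightarrow>
     (a = tau \<and> (\<exists>t'. tau_steps tr tau t t' \<and> R s t' \<and> R s' t')) \<or>
     (\<exists>t1 t2. gsteps tr tau x R s t t1 \<and> tr t1 a t2 \<and> settles R s' t2)"

definition lax_bisim :: "('s \<Rightarrow> 's \<Rightarrow> bool) \<Rightarrow> bool" where
  "lax_bisim R \<longleftrightarrow>
     symp R \<and> (\<forall>s t a s'. R s t \<and> tr s a s' \<longrightarrow> lax_transfer R s t a s') \<and> explicit_divergence R"

definition lax_bisimilar :: "'s \<Rightarrow> 's \<Rightarrow> bool" where
  "lax_bisimilar s t \<longleftrightarrow> (\<exists>R. lax_bisim R \<and> R s t)"

lemma lax_transferE:
  assumes "lax_transfer R s t a s'"
  obtains (silent) t' where "a = tau" "tau_steps tr tau t t'" "R s t'" "R s' t'"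
  | (visible) t1 t2 where "gsteps tr tau x R s t t1" "tr t1 a t2" "settles R s' t2"
  using assms unfolding lax_transfer_def by (elim disjE exE conjE) (metis that)+

lemma lax_transfer_visibleI:
  "gsteps tr tau x R s t t1 \<Longrightarrow> tr t1 a t2 \<Longrightarrow> settles R s' t2 \<Longrightarrow> lax_transfer R s t a s'"
  unfolding lax_transfer_def by blast

lemma transfer_imp_lax_transfer:
  assumes "R s t" and "transfer R s t a s'"
  shows "lax_transfer R s t a s'"
  using assms(2)
proof (cases rule: transferE)
  case silent
  then show ?thesis unfolding lax_transfer_def using assms(1) tau_steps_refl[of tr tau t] by blast
qed (rule lax_transfer_visibleI)

lemma generic_bisim_ed_imp_lax_bisim: "generic_bisim_ed tr tau x y R \<Longrightarrow> lax_bisim R"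
  unfolding generic_bisim_ed_iff lax_bisim_def using transfer_imp_lax_transfer by blast

lemma lax_transfer_mono:
  assumes "lax_transfer R s t a s'" and le: "R \<le> R'"
  shows "lax_transfer R' s t a s'"
  using assms(1)
proof (cases rule: lax_transferE)
  case (silent t')
  then show ?thesis unfolding lax_transfer_def using le by blast
next
  case (visible t1 t2)
  obtain t' where "gsteps tr tau y R s' t2 t'" "R s' t'" using visible(3) unfolding settles_def by blast
  then have "settles R' s' t2" unfolding settles_def using gsteps_mono[of tr tau y R, OF _ le] le by blast
  with gsteps_mono[OF visible(1) le] visible(2) show ?thesis by (rule lax_transfer_visibleI)
qed

lemma lax_transfer_tau_steps_pre:
  assumes steps: "tau_steps tr tau t t0" and Bm: "x = Bm \<Longrightarrow> R s t"
    and "lax_transfer R s t0 a s'"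
  shows "lax_transfer R s t a s'"
  using \<open>lax_transfer R s t0 a s'\<close>
proof (cases rule: lax_transferE)
  case (silent t')
  then show ?thesis unfolding lax_transfer_def using tau_steps_trans[OF steps] by blast
next
  case (visible t1 t2)
  have "gsteps tr tau x R s t t1" using gsteps_tau_steps_pre[OF steps Bm visible(1)] .
  then show ?thesis using visible(2,3) by (rule lax_transfer_visibleI)
qed

lemma lax_bisim_le: "lax_bisim R \<Longrightarrow> R s t \<Longrightarrow> lax_bisimilar s t"
  unfolding lax_bisimilar_def by blast

lemma lax_bisimilar_sym:
  assumes "lax_bisimilar s t"
  shows "lax_bisimilar t s"
proof -
  obtain R where "lax_bisim R" "R s t" using assms unfolding lax_bisimilar_def by blast
  then have "R t s" unfolding lax_bisim_def by (blast dest: sympD)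
  with \<open>lax_bisim R\<close> show ?thesis by (rule lax_bisim_le)
qed

lemma lax_bisimilar_transfer:
  assumes "lax_bisimilar s t" and "tr s a s'"
  shows "lax_transfer lax_bisimilar s t a s'"
proof -
  obtain R where R: "lax_bisim R" "R s t" using assms(1) unfolding lax_bisimilar_def by blast
  then have "lax_transfer R s t a s'" using assms(2) unfolding lax_bisim_def by blast
  moreover have "R \<le> lax_bisimilar" using lax_bisim_le[OF R(1)] by blast
  ultimately show ?thesis by (rule lax_transfer_mono)
qed

lemma lax_bisimilar_divergence: "explicit_divergence lax_bisimilar"
  unfolding explicit_divergence_def lax_bisimilar_def lax_bisim_def by blast

lemma lax_bisimilar_tau_steps_match:
  assumes "tau_steps tr tau q w" and "lax_bisimilar q s"
  shows "\<exists>s'. tau_steps tr tau s s' \<and> lax_bisimilar w s'"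
  using assms(1)
proof (induction rule: tau_steps_induct)
  case refl
  then show ?case using assms(2) tau_steps_refl[of tr tau s] by blast
next
  case (step m m')
  then obtain sm where sm: "tau_steps tr tau s sm" "lax_bisimilar m sm" by blast
  from lax_bisimilar_transfer[OF sm(2) step(2)] show ?case
  proof (cases rule: lax_transferE)
    case (silent t')
    then show ?thesis using tau_steps_trans[OF sm(1)] by blast
  next
    case (visible t1 t2)
    obtain t' where "tau_steps tr tau t2 t'" "lax_bisimilar m' t'"
      using settles_imp_tau_steps[OF visible(3)] by blast
    moreover have "tau_steps tr tau sm t2"
      using tau_steps_trans[OF gsteps_imp_tau_steps[OF visible(1)] tau_step_imp_tau_steps[of tr, OF visible(2)]] .
    ultimately show ?thesis using sm(1) tau_steps_trans by metis
  qed
qed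

definition stuttered :: "'s \<Rightarrow> 's \<Rightarrow> bool" where
  "stuttered s w \<longleftrightarrow>
     (\<exists>q q'. lax_bisimilar s q \<and> tau_steps tr tau q w \<and> tau_steps tr tau w q' \<and> lax_bisimilar s q')"

lemma stuttered_reaches_lax_bisimilar:
  assumes "stuttered s t \<or> stuttered t s"
  shows "\<exists>t'. tau_steps tr tau t t' \<and> lax_bisimilar s t'"
  using assms
proof
  assume "stuttered t s"
  then obtain q where "lax_bisimilar t q" "tau_steps tr tau q s" unfolding stuttered_def by blast
  then show ?thesis using lax_bisimilar_tau_steps_match lax_bisimilar_sym by blast
qed (auto simp: stuttered_def)

lemma stuttered_lax_bisim: "lax_bisim (\<lambda>s t. stuttered s t \<or> stuttered t s)" (is "lax_bisim ?R")
proof -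
  have le: "lax_bisimilar \<le> ?R"
  proof (intro predicate2I)
    fix s t assume "lax_bisimilar s t"
    then show "?R s t" unfolding stuttered_def by (intro disjI1 exI[of _ t]) simp
  qed
  have "lax_transfer ?R s t a s'" if R: "?R s t" and step: "tr s a s'" for s t a s'
  proof -
    obtain t' where t': "tau_steps tr tau t t'" "lax_bisimilar s t'"
      using stuttered_reaches_lax_bisimilar[OF R] by blast
    have "lax_transfer ?R s t' a s'" by (rule lax_transfer_mono[OF lax_bisimilar_transfer[OF t'(2) step] le])
    then show ?thesis using lax_transfer_tau_steps_pre[OF t'(1), of ?R s a s'] R by blast
  qed
  moreover have "explicit_divergence ?R"
    unfolding explicit_divergence_def
  proof (intro allI impI, elim conjE)
    fix s t f assume R: "?R s t" and f: "f 0 = s" "\<forall>i. tr (f i) tau (f (Suc i))"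
    obtain t' where t': "tau_steps tr tau t t'" "lax_bisimilar s t'"
      using stuttered_reaches_lax_bisimilar[OF R] by blast
    then obtain t'' k where "tau_steps_plus tr tau t' t''" "lax_bisimilar (f k) t''"
      using lax_bisimilar_divergence f unfolding explicit_divergence_def by blast
    then show "\<exists>t' k. tau_steps_plus tr tau t t' \<and> ?R (f k) t'"
      using tau_steps_plus_trans[OF t'(1)] le by blast
  qed
  ultimately show ?thesis unfolding lax_bisim_def by (auto intro: sympI)
qed

lemma lax_bisimilar_stutter:
  "lax_bisimilar s q \<Longrightarrow> tau_steps tr tau q w \<Longrightarrow> tau_steps tr tau w q' \<Longrightarrow> lax_bisimilar s q'
    \<Longrightarrow> lax_bisimilar s w"
  using lax_bisim_le[OF stuttered_lax_bisim] unfolding stuttered_def by blast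

abbreviation tau_pow :: "nat \<Rightarrow> 's \<Rightarrow> 's \<Rightarrow> bool" where
  "tau_pow n \<equiv> (\<lambda>s t. tr s tau t) ^^ n"

lemma tau_pow_imp_tau_steps: "tau_pow n s t \<Longrightarrow> tau_steps tr tau s t"
  unfolding tau_steps_def by (rule relpowp_imp_rtranclp)

lemma tau_steps_imp_tau_pow: "tau_steps tr tau s t \<Longrightarrow> \<exists>n. tau_pow n s t"
  unfolding tau_steps_def by (rule rtranclp_imp_relpowp)

text \<open>Duplicator plays along lax bisimilarity. A pending challenge (a,u') of u is answered
  from v along a matching path of minimal length; these lengths are the ranks that make every
  Duplicator phase terminate.\<close>

definition frown_witness :: "'s \<Rightarrow> 'a \<Rightarrow> 's \<Rightarrow> 's \<Rightarrow> nat \<Rightarrow> bool" where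
  "frown_witness u a u' v n \<longleftrightarrow> (\<exists>i j t1 t2 t'. n = i + j \<and> tau_pow i v t1 \<and> tr t1 a t2 \<and> tau_pow j t2 t' \<and>
     (x = Bm \<longrightarrow> lax_bisimilar u v \<and> lax_bisimilar u t1) \<and> (y = Bm \<longrightarrow> lax_bisimilar u' t2) \<and>
     lax_bisimilar u' t')"

definition smile_witness :: "'s \<Rightarrow> 's \<Rightarrow> nat \<Rightarrow> bool" where
  "smile_witness u' v n \<longleftrightarrow>
     0 < n \<and> (\<exists>t'. tau_pow n v t' \<and> lax_bisimilar u' t') \<and> (y = Bm \<longrightarrow> lax_bisimilar u' v)"

definition frown_ok :: "'s \<Rightarrow> 'a \<Rightarrow> 's \<Rightarrow> 's \<Rightarrow> bool" where
  "frown_ok u a u' v \<longleftrightarrow> (a = tau \<and> lax_bisimilar u' v) \<or> (\<exists>n. frown_witness u a u' v n)"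

definition frown_rank :: "'s \<Rightarrow> 'a \<Rightarrow> 's \<Rightarrow> 's \<Rightarrow> nat" where
  "frown_rank u a u' v = (LEAST n. frown_witness u a u' v n)"

definition smile_rank :: "'s \<Rightarrow> 's \<Rightarrow> nat" where
  "smile_rank u' v = (LEAST n. smile_witness u' v n)"

definition strat_inv :: "('s, 'a) conf \<Rightarrow> bool" where
  "strat_inv c \<longleftrightarrow> (\<exists>p q r. c = Conf Spoiler (p, q) None None r \<and> lax_bisimilar p q) \<or>
    (\<exists>ow p q a u' v r. c = Conf ow (p, q) (Some (a, u')) (Some (v, Frown)) r \<and> tr p a u' \<and>
       lax_bisimilar p q \<and> frown_ok p a u' v) \<or>
    (\<exists>ow p q a u' v r. c = Conf ow (p, q) (Some (a, u')) (Some (v, Smile)) r \<and> lax_bisimilar p q \<and>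
       (y = Bm \<longrightarrow> p = u' \<and> v = q) \<and> (\<exists>n. smile_witness u' v n))"

lemma strat_inv_None: "lax_bisimilar p q \<Longrightarrow> strat_inv (Conf Spoiler (p, q) None None r)"
  unfolding strat_inv_def by blast

lemma strat_inv_NoneD: "strat_inv (Conf Spoiler (p, q) None None r) \<Longrightarrow> lax_bisimilar p q"
  unfolding strat_inv_def by auto

lemma strat_inv_Frown:
  "tr p a u' \<Longrightarrow> lax_bisimilar p q \<Longrightarrow> frown_ok p a u' v \<Longrightarrow>
    strat_inv (Conf ow (p, q) (Some (a, u')) (Some (v, Frown)) r)"
  unfolding strat_inv_def by blast

lemma strat_inv_Smile:
  "lax_bisimilar p q \<Longrightarrow> (y = Bm \<Longrightarrow> p = u' \<and> v = q) \<Longrightarrow> smile_witness u' v n \<Longrightarrow>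
    strat_inv (Conf ow (p, q) (Some (a, u')) (Some (v, Smile)) r)"
  unfolding strat_inv_def by blast

lemma lax_bisimilar_frown_ok:
  assumes R: "lax_bisimilar s t" and step: "tr s a s'"
  shows "frown_ok s a s' t"
  using lax_bisimilar_transfer[OF R step]
proof (cases rule: lax_transferE)
  case (silent t')
  show ?thesis
  proof (cases "t = t'")
    case True
    then show ?thesis unfolding frown_ok_def using silent by simp
  next
    case False
    then obtain t1 where t1: "tau_steps tr tau t t1" "tr t1 tau t'"
      using tau_steps_plus_last_step tau_steps_neq_imp_plus[OF silent(2)] by metis
    obtain i where i: "tau_pow i t t1" using tau_steps_imp_tau_pow[OF t1(1)] by blast
    have "lax_bisimilar s t1"
      by (rule lax_bisimilar_stutter[OF R t1(1) tau_step_imp_tau_steps[of tr, OF t1(2)] silent(3)])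
    then have "frown_witness s a s' t (i + 0)"
      unfolding frown_witness_def
      by (intro exI[of _ i] exI[of _ 0] exI[of _ t1] exI[of _ t'] conjI) (use i t1(2) silent R in auto)
    then show ?thesis unfolding frown_ok_def by blast
  qed
next
  case (visible t1 t2)
  obtain t' where t': "gsteps tr tau y lax_bisimilar s' t2 t'" "lax_bisimilar s' t'"
    using visible(3) unfolding settles_def by blast
  obtain i where "tau_pow i t t1" using tau_steps_imp_tau_pow[OF gsteps_imp_tau_steps[OF visible(1)]] by blast
  moreover obtain j where "tau_pow j t2 t'" using tau_steps_imp_tau_pow[OF gsteps_imp_tau_steps[OF t'(1)]] by blast
  ultimately have "frown_witness s a s' t (i + j)"
    unfolding frown_witness_def using visible(2) t'(2) gsteps_BmD[OF visible(1)] gsteps_BmD[OF t'(1)] by blast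
  then show ?thesis unfolding frown_ok_def by blast
qed

lemma strat_inv_Spoiler_move:
  assumes inv: "strat_inv (Conf Spoiler (p, q) c m r)"
    and mv: "game_move tr tau (Eset x y) (Conf Spoiler (p, q) c m r) c'"
  shows "strat_inv c'"
proof -
  have R: "lax_bisimilar p q" using inv unfolding strat_inv_def by auto
  have repeat: "c = None \<or> strat_inv (Conf Duplicator (p, q) c m Star)"
    using inv unfolding strat_inv_def by auto
  from mv show ?thesis
  proof (cases rule: game_move_SpoilerE)
    case S1
    then show ?thesis using repeat by auto
  next
    case (S2a a p')
    then show ?thesis using strat_inv_Frown lax_bisimilar_frown_ok R by blast
  next
    case (S2b a p')
    then show ?thesis using strat_inv_Frown lax_bisimilar_frown_ok R by blast
  next
    case (S3 a q')
    then show ?thesis using strat_inv_Frown lax_bisimilar_frown_ok lax_bisimilar_sym[OF R] by blast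
  qed
qed

definition frown_progress :: "'s \<Rightarrow> 'a \<Rightarrow> 's \<Rightarrow> 's \<Rightarrow> ('s, 'a) conf \<Rightarrow> bool" where
  "frown_progress p a u' v c' \<longleftrightarrow> conf_reward c' = Check \<or>
     (a = tau \<and> lax_bisimilar u' v \<and> (\<forall>w. tr v tau w \<longrightarrow> \<not> lax_bisimilar u' w) \<and>
        c' = Conf Spoiler (u', v) None None Star) \<or>
     (\<not> (a = tau \<and> lax_bisimilar u' v) \<and>
       ((\<exists>q' v' r'. c' = Conf Spoiler (p, q') (Some (a, u')) (Some (v', Frown)) r' \<and> tr v tau v' \<and>
           \<not> (a = tau \<and> lax_bisimilar u' v') \<and> frown_rank p a u' v' < frown_rank p a u' v) \<or>
        (\<exists>pq v' r'. c' = Conf Spoiler pq (Some (a, u')) (Some (v', Smile)) r')))"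

definition smile_progress :: "'a \<Rightarrow> 's \<Rightarrow> 's \<Rightarrow> ('s, 'a) conf \<Rightarrow> bool" where
  "smile_progress a u' v c' \<longleftrightarrow> conf_reward c' = Check \<or>
     (\<exists>pq v' r'. c' = Conf Spoiler pq (Some (a, u')) (Some (v', Smile)) r' \<and> smile_rank u' v' < smile_rank u' v)"

lemma frown_answer_Check:
  assumes "a = tau" "tr v tau w" "lax_bisimilar u' w"
  shows "\<exists>c'. game_move tr tau (Eset x y) (Conf Duplicator (p, q) (Some (a, u')) (Some (v, Frown)) r) c' \<and>
    strat_inv c' \<and> frown_progress p a u' v c'"
proof (intro exI conjI)
  show "game_move tr tau (Eset x y) (Conf Duplicator (p, q) (Some (a, u')) (Some (v, Frown)) r)
      (Conf Spoiler (u', w) None None Check)"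
    using assms by (auto intro: game_move.D2b)
  show "strat_inv (Conf Spoiler (u', w) None None Check)" using assms(3) by (rule strat_inv_None)
qed (simp add: frown_progress_def)

lemma frown_answer_silent:
  assumes "a = tau" "lax_bisimilar u' v" "\<forall>w. tr v tau w \<longrightarrow> \<not> lax_bisimilar u' w"
  shows "\<exists>c'. game_move tr tau (Eset x y) (Conf Duplicator (p, q) (Some (a, u')) (Some (v, Frown)) r) c' \<and>
    strat_inv c' \<and> frown_progress p a u' v c'"
proof (intro exI conjI)
  show "game_move tr tau (Eset x y) (Conf Duplicator (p, q) (Some (a, u')) (Some (v, Frown)) r)
      (Conf Spoiler (u', v) None None Star)"
    using assms(1) by (auto intro: game_move.D1)
  show "strat_inv (Conf Spoiler (u', v) None None Star)" using assms(2) by (rule strat_inv_None)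
qed (use assms in \<open>simp add: frown_progress_def\<close>)

lemma frown_answer_internal:
  assumes step: "tr p a u'" and R: "lax_bisimilar p q" and internal: "tr v tau v1"
    and R1: "x = Bm \<Longrightarrow> lax_bisimilar p v1"
    and wit: "frown_witness p a u' v1 n" and rank: "n < frown_rank p a u' v"
    and no_Check: "\<not> (a = tau \<and> lax_bisimilar u' v1)" and not_silent: "\<not> (a = tau \<and> lax_bisimilar u' v)"
  shows "\<exists>c'. game_move tr tau (Eset x y) (Conf Duplicator (p, q) (Some (a, u')) (Some (v, Frown)) r) c' \<and>
    strat_inv c' \<and> frown_progress p a u' v c'"
proof -
  let ?D = "Conf Duplicator (p, q) (Some (a, u')) (Some (v, Frown)) r"
  have "frown_rank p a u' v1 \<le> n"
    unfolding frown_rank_def by (rule Least_le) (rule wit)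
  then have progress: "frown_progress p a u' v (Conf Spoiler (p, q') (Some (a, u')) (Some (v1, Frown)) Star)"
    for q'
    unfolding frown_progress_def using not_silent no_Check internal rank by auto
  show ?thesis
  proof (cases x)
    case Om
    have "game_move tr tau (Eset x y) ?D (Conf Spoiler (p, q) (Some (a, u')) (Some (v1, Frown)) Star)"
      using internal Om by (auto intro: game_move.D3c)
    moreover have "strat_inv (Conf Spoiler (p, q) (Some (a, u')) (Some (v1, Frown)) Star)"
      by (rule strat_inv_Frown[OF step R]) (use Om wit frown_ok_def in auto)
    ultimately show ?thesis using progress by blast
  next
    case Bm
    have "game_move tr tau (Eset x y) ?D (Conf Spoiler (p, v1) (Some (a, u')) (Some (v1, Frown)) Star)"
      using internal by (auto intro: game_move.D3a)
    moreover have "strat_inv (Conf Spoiler (p, v1) (Some (a, u')) (Some (v1, Frown)) Star)"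
      by (rule strat_inv_Frown[OF step R1[OF Bm]]) (use wit frown_ok_def in auto)
    ultimately show ?thesis using progress by blast
  qed
qed

lemma frown_answer_visible:
  assumes R: "lax_bisimilar p q" and visible: "tr v a t2" and j: "tau_pow j t2 t'"
    and y_Bm: "y = Bm \<Longrightarrow> lax_bisimilar u' t2" and R': "lax_bisimilar u' t'"
    and not_silent: "\<not> (a = tau \<and> lax_bisimilar u' v)"
  shows "\<exists>c'. game_move tr tau (Eset x y) (Conf Duplicator (p, q) (Some (a, u')) (Some (v, Frown)) r) c' \<and>
    strat_inv c' \<and> frown_progress p a u' v c'"
proof -
  let ?D = "Conf Duplicator (p, q) (Some (a, u')) (Some (v, Frown)) r"
  show ?thesis
  proof (cases j)
    case 0
    then have "t2 = t'" using j by simp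
    have "game_move tr tau (Eset x y) ?D (Conf Spoiler (u', t2) None None Check)"
      using visible by (auto intro: game_move.D2b)
    moreover have "strat_inv (Conf Spoiler (u', t2) None None Check)"
      using strat_inv_None R' \<open>t2 = t'\<close> by blast
    ultimately show ?thesis unfolding frown_progress_def by auto
  next
    case (Suc j')
    have wit: "smile_witness u' t2 j" unfolding smile_witness_def using Suc j R' y_Bm by blast
    have progress: "frown_progress p a u' v (Conf Spoiler pq (Some (a, u')) (Some (t2, Smile)) Star)" for pq
      unfolding frown_progress_def using not_silent by blast
    show ?thesis
    proof (cases y)
      case Om
      have "game_move tr tau (Eset x y) ?D (Conf Spoiler (p, q) (Some (a, u')) (Some (t2, Smile)) Star)"
        using visible Om by (auto intro: game_move.D2c)
      moreover have "strat_inv (Conf Spoiler (p, q) (Some (a, u')) (Some (t2, Smile)) Star)"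
        by (rule strat_inv_Smile[OF R _ wit]) (use Om in simp)
      ultimately show ?thesis using progress by blast
    next
      case Bm
      have "game_move tr tau (Eset x y) ?D (Conf Spoiler (u', t2) (Some (a, u')) (Some (t2, Smile)) Star)"
        using visible by (auto intro: game_move.D2a)
      moreover have "strat_inv (Conf Spoiler (u', t2) (Some (a, u')) (Some (t2, Smile)) Star)"
        by (rule strat_inv_Smile[OF _ _ wit]) (use Bm y_Bm in auto)
      ultimately show ?thesis using progress by blast
    qed
  qed
qed

lemma frown_answer:
  assumes step: "tr p a u'" and R: "lax_bisimilar p q" and ok: "frown_ok p a u' v"
  shows "\<exists>c'. game_move tr tau (Eset x y) (Conf Duplicator (p, q) (Some (a, u')) (Some (v, Frown)) r) c' \<and>
    strat_inv c' \<and> frown_progress p a u' v c'"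
proof (cases "a = tau \<and> (\<exists>w. tr v tau w \<and> lax_bisimilar u' w)")
  case True
  then show ?thesis using frown_answer_Check by blast
next
  case no_Check: False
  show ?thesis
  proof (cases "a = tau \<and> lax_bisimilar u' v")
    case True
    then show ?thesis using frown_answer_silent no_Check by blast
  next
    case not_silent: False
    then obtain n where "frown_witness p a u' v n" using ok unfolding frown_ok_def by blast
    then have "frown_witness p a u' v (frown_rank p a u' v)"
      unfolding frown_rank_def by (rule LeastI)
    then obtain i j t1 t2 t' where rank: "frown_rank p a u' v = i + j" and i: "tau_pow i v t1"
      and visible: "tr t1 a t2" and j: "tau_pow j t2 t'"
      and x_Bm: "x = Bm \<longrightarrow> lax_bisimilar p v \<and> lax_bisimilar p t1"
      and y_Bm: "y = Bm \<longrightarrow> lax_bisimilar u' t2" and R': "lax_bisimilar u' t'"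
      unfolding frown_witness_def by blast
    show ?thesis
    proof (cases i)
      case 0
      then show ?thesis using frown_answer_visible[OF R _ j _ R' not_silent] i visible y_Bm by simp
    next
      case (Suc i')
      then obtain v1 where v1: "tr v tau v1" "tau_pow i' v1 t1"
        using i relpowp_Suc_D2[where P = "\<lambda>s t. tr s tau t"] by blast
      have R1: "lax_bisimilar p v1" if "x = Bm"
        using lax_bisimilar_stutter[of p v v1 t1] x_Bm that tau_step_imp_tau_steps[of tr, OF v1(1)]
          tau_pow_imp_tau_steps[OF v1(2)] by blast
      have "frown_witness p a u' v1 (i' + j)"
        unfolding frown_witness_def using v1(2) visible j x_Bm y_Bm R' R1 by blast
      moreover have "i' + j < frown_rank p a u' v" using rank Suc by simp
      ultimately show ?thesis
        using frown_answer_internal[OF step R v1(1) R1] no_Check not_silent v1(1) by blast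
    qed
  qed
qed

lemma smile_answer:
  assumes R: "lax_bisimilar p q" and Bm: "y = Bm \<Longrightarrow> p = u' \<and> v = q" and wit: "smile_witness u' v n"
  shows "\<exists>c'. game_move tr tau (Eset x y) (Conf Duplicator (p, q) (Some (a, u')) (Some (v, Smile)) r) c' \<and>
    strat_inv c' \<and> smile_progress a u' v c'"
proof -
  let ?D = "Conf Duplicator (p, q) (Some (a, u')) (Some (v, Smile)) r"
  have "smile_witness u' v (smile_rank u' v)"
    unfolding smile_rank_def using wit by (rule LeastI)
  then obtain t' where pos: "0 < smile_rank u' v" and path: "tau_pow (smile_rank u' v) v t'"
    and R': "lax_bisimilar u' t'" and y_Bm: "y = Bm \<longrightarrow> lax_bisimilar u' v"
    unfolding smile_witness_def by blast
  obtain n1 where n1: "smile_rank u' v = Suc n1" using pos gr0_implies_Suc by blast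
  obtain v1 where v1: "tr v tau v1" "tau_pow n1 v1 t'"
    using relpowp_Suc_D2[where P = "\<lambda>s t. tr s tau t"] path n1 by metis
  show ?thesis
  proof (cases n1)
    case 0
    then have "v1 = t'" using v1(2) by simp
    have "game_move tr tau (Eset x y) ?D (Conf Spoiler (u', t') None None Check)"
      using v1(1) \<open>v1 = t'\<close> by (auto intro: game_move.D3b)
    moreover have "strat_inv (Conf Spoiler (u', t') None None Check)" by (rule strat_inv_None[OF R'])
    ultimately show ?thesis unfolding smile_progress_def by auto
  next
    case (Suc n2)
    have R1: "lax_bisimilar u' v1" if "y = Bm"
      using lax_bisimilar_stutter[of u' v v1 t'] y_Bm that tau_step_imp_tau_steps[of tr, OF v1(1)]
        tau_pow_imp_tau_steps[OF v1(2)] R' by blast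
    have wit1: "smile_witness u' v1 n1" unfolding smile_witness_def using Suc v1(2) R' R1 by blast
    have progress: "smile_progress a u' v (Conf Spoiler pq (Some (a, u')) (Some (v1, Smile)) Star)" for pq
    proof -
      have "smile_rank u' v1 \<le> n1" unfolding smile_rank_def by (rule Least_le) (rule wit1)
      then show ?thesis unfolding smile_progress_def using n1 by auto
    qed
    show ?thesis
    proof (cases y)
      case Om
      have "game_move tr tau (Eset x y) ?D (Conf Spoiler (p, q) (Some (a, u')) (Some (v1, Smile)) Star)"
        using v1(1) Om by (auto intro: game_move.D3c)
      moreover have "strat_inv (Conf Spoiler (p, q) (Some (a, u')) (Some (v1, Smile)) Star)"
        by (rule strat_inv_Smile[OF R _ wit1]) (use Om in simp)
      ultimately show ?thesis using progress by blast
    next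
      case Bm
      have "game_move tr tau (Eset x y) ?D (Conf Spoiler (p, v1) (Some (a, u')) (Some (v1, Smile)) Star)"
        using v1(1) by (auto intro: game_move.D3a)
      moreover have "strat_inv (Conf Spoiler (p, v1) (Some (a, u')) (Some (v1, Smile)) Star)"
        by (rule strat_inv_Smile[OF _ _ wit1]) (use R1[OF Bm] assms(2)[OF Bm] in auto)
      ultimately show ?thesis using progress by blast
    qed
  qed
qed

definition progress :: "('s, 'a) conf \<Rightarrow> ('s, 'a) conf \<Rightarrow> bool" where
  "progress c c' \<longleftrightarrow>
    (\<forall>p q a u' v r. c = Conf Duplicator (p, q) (Some (a, u')) (Some (v, Frown)) r \<longrightarrow>
       frown_progress p a u' v c') \<and>
    (\<forall>p q a u' v r. c = Conf Duplicator (p, q) (Some (a, u')) (Some (v, Smile)) r \<longrightarrow>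
       smile_progress a u' v c')"

lemma progress_Frown [simp]:
  "progress (Conf Duplicator (p, q) (Some (a, u')) (Some (v, Frown)) r) c' \<longleftrightarrow> frown_progress p a u' v c'"
  by (simp add: progress_def)

lemma progress_Smile [simp]:
  "progress (Conf Duplicator (p, q) (Some (a, u')) (Some (v, Smile)) r) c' \<longleftrightarrow> smile_progress a u' v c'"
  by (simp add: progress_def)

definition good_move :: "('s, 'a) conf \<Rightarrow> ('s, 'a) conf \<Rightarrow> bool" where
  "good_move c c' \<longleftrightarrow> game_move tr tau (Eset x y) c c' \<and> strat_inv c' \<and> progress c c'"

lemma good_move_exists:
  assumes inv: "strat_inv c" and D: "conf_owner c = Duplicator"
  shows "\<exists>c'. good_move c c'"
proof -
  from inv D consider
      (Frown) p q a u' v r where "c = Conf Duplicator (p, q) (Some (a, u')) (Some (v, Frown)) r"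
        "tr p a u'" "lax_bisimilar p q" "frown_ok p a u' v"
    | (Smile) p q a u' v r n where "c = Conf Duplicator (p, q) (Some (a, u')) (Some (v, Smile)) r"
        "lax_bisimilar p q" "y = Bm \<longrightarrow> p = u' \<and> v = q" "smile_witness u' v n"
    unfolding strat_inv_def by auto
  then show ?thesis
  proof cases
    case Frown
    then show ?thesis unfolding good_move_def using frown_answer[of p a u' q v r] by auto
  next
    case Smile
    then show ?thesis unfolding good_move_def using smile_answer[of p q u' v n a r] by auto
  qed
qed

definition strat :: "('s, 'a) conf list \<Rightarrow> ('s, 'a) conf" where
  "strat h = (if \<exists>c'. good_move (last h) c' then SOME c'. good_move (last h) c'
              else SOME c'. game_move tr tau (Eset x y) (last h) c')"

lemma strat_good_move:
  "strat_inv (last h) \<Longrightarrow> conf_owner (last h) = Duplicator \<Longrightarrow> good_move (last h) (strat h)"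
  using good_move_exists unfolding strat_def by (metis (mono_tags, lifting) someI_ex)

lemma strat_dup_strategy: "dup_strategy tr tau (Eset x y) strat"
  unfolding dup_strategy_def
proof (intro allI impI)
  fix h assume "h \<noteq> [] \<and> conf_owner (last h) = Duplicator \<and> (\<exists>c'. game_move tr tau (Eset x y) (last h) c')"
  then have ex: "\<exists>c'. game_move tr tau (Eset x y) (last h) c'" by blast
  show "game_move tr tau (Eset x y) (last h) (strat h)"
  proof (cases "\<exists>c'. good_move (last h) c'")
    case True
    then have "good_move (last h) (strat h)" unfolding strat_def by (simp add: someI_ex)
    then show ?thesis by (simp add: good_move_def)
  next
    case False
    then have "strat h = (SOME c'. game_move tr tau (Eset x y) (last h) c')"
      unfolding strat_def by (simp only: if_False)
    then show ?thesis using someI_ex[OF ex] by simp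
  qed
qed

lemma strat_inv_move:
  assumes inv: "strat_inv c" and mv: "game_move tr tau (Eset x y) c c'"
    and strat: "conf_owner c = Duplicator \<Longrightarrow> c' = strat h" and l: "last h = c"
  shows "strat_inv c'"
proof (cases "conf_owner c")
  case Spoiler
  then obtain pq cc m r where "c = Conf Spoiler pq cc m r" by (cases c) auto
  then show ?thesis using strat_inv_Spoiler_move inv mv by (cases pq) auto
next
  case Duplicator
  then have "good_move c c'" using strat_good_move[of h] inv strat l by simp
  then show ?thesis by (simp add: good_move_def)
qed

lemma finite_play_strat_inv:
  assumes fp: "finite_play tr tau (Eset x y) strat c0 h" and inv0: "strat_inv c0" and i: "i < length h"
  shows "strat_inv (h ! i)"
  using i
proof (induction i)
  case 0
  then show ?case using fp inv0 by (simp add: finite_play_def)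
next
  case (Suc i)
  have "game_move tr tau (Eset x y) (h ! i) (h ! Suc i) \<and>
      (conf_owner (h ! i) = Duplicator \<longrightarrow> h ! Suc i = strat (take (Suc i) h))"
    using fp Suc.prems unfolding finite_play_def by blast
  moreover have "last (take (Suc i) h) = h ! i"
    using Suc.prems by (metis Suc_lessD last_snoc take_Suc_conv_app_nth)
  ultimately show ?case using strat_inv_move Suc by simp
qed

lemma infinite_play_strat_inv:
  assumes ip: "infinite_play tr tau (Eset x y) strat c0 pl" and inv0: "strat_inv c0"
  shows "strat_inv (pl i)"
proof (induction i)
  case 0
  then show ?case using ip inv0 by (simp add: infinite_play_def)
next
  case (Suc i)
  have "game_move tr tau (Eset x y) (pl i) (pl (Suc i)) \<and>
      (conf_owner (pl i) = Duplicator \<longrightarrow> pl (Suc i) = strat (map pl [0..<Suc i]))"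
    using ip unfolding infinite_play_def by blast
  then show ?case using strat_inv_move[of "pl i" "pl (Suc i)" "map pl [0..<Suc i]"] Suc by simp
qed

lemma infinite_play_good_move:
  assumes ip: "infinite_play tr tau (Eset x y) strat c0 pl" and inv0: "strat_inv c0"
    and D: "conf_owner (pl i) = Duplicator"
  shows "good_move (pl i) (pl (Suc i))"
proof -
  have "pl (Suc i) = strat (map pl [0..<Suc i])" using ip D unfolding infinite_play_def by blast
  then show ?thesis
    using strat_good_move[of "map pl [0..<Suc i]"] infinite_play_strat_inv[OF ip inv0, of i] D by simp
qed

context
  fixes c0 :: "('s, 'a) conf" and pl :: "nat \<Rightarrow> ('s, 'a) conf" and N :: nat
  assumes play: "infinite_play tr tau (Eset x y) strat c0 pl" and inv0: "strat_inv c0"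
    and no_Check: "\<And>i. N \<le> i \<Longrightarrow> conf_reward (pl i) \<noteq> Check"
begin

lemma tail_Spoiler_move:
  assumes "N \<le> i" and l: "pl i = Conf Spoiler (p, q) c m r"
  shows "(c \<noteq> None \<and> pl (Suc i) = Conf Duplicator (p, q) c m Star) \<or>
    (c = None \<and> (\<exists>a p'. tr p a p' \<and> pl (Suc i) = Conf Duplicator (p, q) (Some (a, p')) (Some (q, Frown)) Star))"
proof -
  have "game_move tr tau (Eset x y) (pl i) (pl (Suc i))" using play unfolding infinite_play_def by blast
  moreover have "conf_reward (pl (Suc i)) \<noteq> Check" using no_Check \<open>N \<le> i\<close> by simp
  ultimately show ?thesis unfolding l by (cases rule: game_move_SpoilerE) auto
qed

lemma tail_repeat:
  "N \<le> i \<Longrightarrow> pl i = Conf Spoiler pq (Some ca) m r \<Longrightarrow> pl (Suc i) = Conf Duplicator pq (Some ca) m Star"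
  using tail_Spoiler_move by (cases pq) fastforce

lemma tail_no_Smile: "N \<le> i \<Longrightarrow> pl i \<noteq> Conf Duplicator (p, q) (Some (a, u')) (Some (v, Smile)) r"
proof (induction "smile_rank u' v" arbitrary: i p q v r rule: less_induct)
  case less
  show ?case
  proof
    assume l: "pl i = Conf Duplicator (p, q) (Some (a, u')) (Some (v, Smile)) r"
    have "smile_progress a u' v (pl (Suc i))"
      using infinite_play_good_move[OF play inv0, of i] l by (simp add: good_move_def)
    then obtain p' q' v' r'
      where next_conf: "pl (Suc i) = Conf Spoiler (p', q') (Some (a, u')) (Some (v', Smile)) r'"
      and less_rank: "smile_rank u' v' < smile_rank u' v"
      unfolding smile_progress_def using no_Check[of "Suc i"] less.prems by auto
    have "pl (Suc (Suc i)) = Conf Duplicator (p', q') (Some (a, u')) (Some (v', Smile)) Star"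
      using tail_repeat[OF _ next_conf] less.prems by simp
    moreover have "pl (Suc (Suc i)) \<noteq> Conf Duplicator (p', q') (Some (a, u')) (Some (v', Smile)) Star"
      by (rule less.hyps[OF less_rank]) (use less.prems in simp)
    ultimately show False by contradiction
  qed
qed

lemma tail_Frown_silent_step:
  assumes "N \<le> i" and "pl i = Conf Duplicator (p, q) (Some (a, u')) (Some (v, Frown)) r"
  shows "a = tau \<and> lax_bisimilar u' v"
proof (rule ccontr)
  assume "\<not> (a = tau \<and> lax_bisimilar u' v)"
  with assms show False
  proof (induction "frown_rank p a u' v" arbitrary: i q v r rule: less_induct)
    case less
    have "frown_progress p a u' v (pl (Suc i))"
      using infinite_play_good_move[OF play inv0, of i] less.prems(2) by (simp add: good_move_def)
    moreover have "conf_reward (pl (Suc i)) \<noteq> Check" using no_Check less.prems(1) by simp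
    ultimately consider
        (Frown) q' v' r' where "pl (Suc i) = Conf Spoiler (p, q') (Some (a, u')) (Some (v', Frown)) r'"
          "\<not> (a = tau \<and> lax_bisimilar u' v')" "frown_rank p a u' v' < frown_rank p a u' v"
      | (Smile) p' q' v' r' where "pl (Suc i) = Conf Spoiler (p', q') (Some (a, u')) (Some (v', Smile)) r'"
      unfolding frown_progress_def using less.prems(3) by auto
    then show False
    proof cases
      case Frown
      have "pl (Suc (Suc i)) = Conf Duplicator (p, q') (Some (a, u')) (Some (v', Frown)) Star"
        using tail_repeat[OF _ Frown(1)] less.prems(1) by simp
      moreover have "N \<le> Suc (Suc i)" using less.prems(1) by simp
      ultimately show False using less.hyps[OF Frown(3) _ _ Frown(2)] by blast
    next
      case Smile
      have "pl (Suc (Suc i)) = Conf Duplicator (p', q') (Some (a, u')) (Some (v', Smile)) Star"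
        using tail_repeat[OF _ Smile] less.prems(1) by simp
      with tail_no_Smile less.prems(1) show False by simp
    qed
  qed
qed

lemma tail_Frown:
  assumes "N \<le> i" and l: "pl i = Conf Duplicator (p, q) (Some (a, u')) (Some (v, Frown)) r"
  shows "a = tau \<and> lax_bisimilar u' v \<and> (\<forall>w. tr v tau w \<longrightarrow> \<not> lax_bisimilar u' w) \<and>
    pl (Suc i) = Conf Spoiler (u', v) None None Star"
proof -
  have "frown_progress p a u' v (pl (Suc i))"
    using infinite_play_good_move[OF play inv0, of i] l by (simp add: good_move_def)
  moreover have "conf_reward (pl (Suc i)) \<noteq> Check" using no_Check \<open>N \<le> i\<close> by simp
  ultimately show ?thesis
    unfolding frown_progress_def using tail_Frown_silent_step[OF assms] by auto
qed

lemma tail_reaches_None: "\<exists>i p q r. N \<le> i \<and> pl i = Conf Spoiler (p, q) None None r"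
proof -
  have "strat_inv (pl N)" using infinite_play_strat_inv[OF play inv0] .
  then consider (None) p q r where "pl N = Conf Spoiler (p, q) None None r"
    | (Frown) ow p q a u' v r where "pl N = Conf ow (p, q) (Some (a, u')) (Some (v, Frown)) r"
    | (Smile) ow p q a u' v r where "pl N = Conf ow (p, q) (Some (a, u')) (Some (v, Smile)) r"
    unfolding strat_inv_def by blast
  then show ?thesis
  proof cases
    case None
    then show ?thesis by blast
  next
    case Frown
    show ?thesis
    proof (cases ow)
      case Spoiler
      then have "pl (Suc N) = Conf Duplicator (p, q) (Some (a, u')) (Some (v, Frown)) Star"
        using tail_repeat Frown by simp
      then have "pl (Suc (Suc N)) = Conf Spoiler (u', v) None None Star" using tail_Frown[of "Suc N"] by simp
      then show ?thesis by (intro exI[of _ "Suc (Suc N)"]) auto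
    next
      case Duplicator
      then have "pl (Suc N) = Conf Spoiler (u', v) None None Star" using tail_Frown[of N] Frown by simp
      then show ?thesis by (intro exI[of _ "Suc N"]) auto
    qed
  next
    case Smile
    have False
    proof (cases ow)
      case Spoiler
      then have "pl (Suc N) = Conf Duplicator (p, q) (Some (a, u')) (Some (v, Smile)) Star"
        using tail_repeat Smile by simp
      then show False using tail_no_Smile[of "Suc N" p q a u' v Star] by simp
    next
      case Duplicator
      then show False using tail_no_Smile[OF order_refl, of p q a u' v r] Smile by simp
    qed
    then show ?thesis ..
  qed
qed

lemma tail_None_step:
  assumes "N \<le> i" and l: "pl i = Conf Spoiler (p, q) None None r"
  shows "\<exists>p'. tr p tau p' \<and> lax_bisimilar p q \<and> (\<forall>w. tr q tau w \<longrightarrow> \<not> lax_bisimilar p' w) \<and>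
    pl (Suc (Suc i)) = Conf Spoiler (p', q) None None Star"
proof -
  have "lax_bisimilar p q" using infinite_play_strat_inv[OF play inv0, of i] l by (simp add: strat_inv_NoneD)
  moreover obtain a p'
    where "tr p a p'" "pl (Suc i) = Conf Duplicator (p, q) (Some (a, p')) (Some (q, Frown)) Star"
    using tail_Spoiler_move[OF assms] by auto
  ultimately show ?thesis using tail_Frown[of "Suc i"] \<open>N \<le> i\<close> by auto
qed

text \<open>Without rewards Spoiler keeps playing silent steps on the left against a fixed state q
  on the right; explicit divergence and stuttering then give a silent step of q that Duplicator
  would have answered with a reward.\<close>

lemma tail_contradiction: False
proof -
  obtain i0 p0 q r0 where i0: "N \<le> i0" "pl i0 = Conf Spoiler (p0, q) None None r0"
    using tail_reaches_None by blast
  define f where "f k = (case pl (i0 + 2 * k) of Conf _ pq _ _ _ \<Rightarrow> fst pq)" for k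
  have f_conf: "\<exists>r. pl (i0 + 2 * k) = Conf Spoiler (f k, q) None None r" for k
  proof (induction k)
    case 0
    then show ?case using i0 by (simp add: f_def)
  next
    case (Suc k)
    then obtain r where "pl (i0 + 2 * k) = Conf Spoiler (f k, q) None None r" by blast
    moreover have "N \<le> i0 + 2 * k" using i0(1) by simp
    ultimately obtain p' where "pl (Suc (Suc (i0 + 2 * k))) = Conf Spoiler (p', q) None None Star"
      using tail_None_step by blast
    then show ?case by (simp add: f_def)
  qed
  have f_step: "tr (f k) tau (f (Suc k)) \<and> lax_bisimilar (f k) q \<and>
      (\<forall>w. tr q tau w \<longrightarrow> \<not> lax_bisimilar (f (Suc k)) w)" for k
  proof -
    obtain r where "pl (i0 + 2 * k) = Conf Spoiler (f k, q) None None r" using f_conf by blast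
    moreover have "N \<le> i0 + 2 * k" using i0(1) by simp
    ultimately obtain p' where p': "tr (f k) tau p'" "lax_bisimilar (f k) q"
        "\<forall>w. tr q tau w \<longrightarrow> \<not> lax_bisimilar p' w" "pl (i0 + 2 * Suc k) = Conf Spoiler (p', q) None None Star"
      using tail_None_step by fastforce
    moreover have "p' = f (Suc k)" using f_conf[of "Suc k"] p'(4) by auto
    ultimately show ?thesis by blast
  qed
  have path: "\<forall>i. tr (f (Suc i)) tau (f (Suc (Suc i)))" using f_step by blast
  obtain t' k where t': "tau_steps_plus tr tau q t'" "lax_bisimilar (f (Suc k)) t'"
    using lax_bisimilar_divergence f_step[of 1] path unfolding explicit_divergence_def by fastforce
  then obtain w where w: "tr q tau w" "tau_steps tr tau w t'" by (blast elim: tau_steps_plusE)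
  have "lax_bisimilar (f (Suc k)) w"
    by (rule lax_bisimilar_stutter[OF _ tau_step_imp_tau_steps[of tr, OF w(1)] w(2) t'(2)])
      (use f_step[of "Suc k"] in blast)
  then show False using f_step[of k] w(1) by blast
qed

end

lemma strat_frequently_Check:
  assumes play: "infinite_play tr tau (Eset x y) strat c0 pl" and inv0: "strat_inv c0"
  shows "\<exists>\<^sub>\<infinity>i. conf_reward (pl i) = Check"
proof (rule ccontr)
  assume "\<not> (\<exists>\<^sub>\<infinity>i. conf_reward (pl i) = Check)"
  then obtain N where "\<And>i. N \<le> i \<Longrightarrow> conf_reward (pl i) \<noteq> Check"
    unfolding cofinite_eq_sequentially not_frequently eventually_sequentially by blast
  from tail_contradiction[OF play inv0 this] show False .
qed

lemma lax_bisimilar_strat_wins: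
  assumes "lax_bisimilar s t"
  shows "dup_wins tr tau (Eset x y) strat (init_conf s t)"
  unfolding dup_wins_def
proof (intro conjI allI impI)
  have inv0: "strat_inv (init_conf s t)" using assms by (rule strat_inv_None)
  show "dup_strategy tr tau (Eset x y) strat" by (rule strat_dup_strategy)
  fix ps assume ps: "finite_play tr tau (Eset x y) strat (init_conf s t) ps \<and>
      \<not> (\<exists>c'. game_move tr tau (Eset x y) (last ps) c')"
  then have "ps \<noteq> []" by (simp add: finite_play_def)
  then have "strat_inv (last ps)"
    using finite_play_strat_inv[OF conjunct1[OF ps] inv0, of "length ps - 1"] by (simp add: last_conv_nth)
  with ps show "conf_owner (last ps) = Spoiler"
    using good_move_exists unfolding good_move_def by (metis owner.exhaust)
next
  fix pl assume "infinite_play tr tau (Eset x y) strat (init_conf s t) pl"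
  then show "\<exists>\<^sub>\<infinity>i. conf_reward (pl i) = Check"
    using strat_frequently_Check strat_inv_None[OF assms] by blast
qed

end

theorem theorem6p10:
  fixes tr :: "'s \<Rightarrow> 'a \<Rightarrow> 's \<Rightarrow> bool" and tau :: 'a and x y :: mode
  shows "bisimilar_ed tr tau x y = game_equiv tr tau (Eset x y)"
proof (intro ext iffI)
  fix s t
  assume "bisimilar_ed tr tau x y s t"
  then obtain R where "generic_bisim_ed tr tau x y R" "R s t" unfolding bisimilar_ed_def by blast
  then have "lax_bisimilar tr tau x y s t" by (blast intro: lax_bisim_le generic_bisim_ed_imp_lax_bisim)
  then show "game_equiv tr tau (Eset x y) s t"
    unfolding game_equiv_def by (blast intro: lax_bisimilar_strat_wins)
next
  fix s t
  assume "game_equiv tr tau (Eset x y) s t"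
  then show "bisimilar_ed tr tau x y s t" by (rule game_equiv_imp_bisimilar_ed)
qed

end
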